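(* Let $N\geq 1$ and let $w,h$ be positive integers satisfying $N/h\leq w\leq N-h+1$ (equivalently $N/w\leq h\leq N-w+1$). Then every $(w,h)$-separable state $\hat\rho$ of $N$ qubits satisfies, for every unit vector $\mathbf{n}\in\mathbb{R}^3$, $$F_Q[\hat\rho,\hat J_{\mathbf n}]\leq w(N-h)+N .$$
   Context: Consider $N$ qubits labelled $1,\dots,N$. For a unit vector $\mathbf n\in\mathbb R^3$, $\hat J_{\mathbf n}=\frac12\sum_{i=1}^N \mathbf n\cdot\hat{\boldsymbol\sigma}^{(i)}$, where $\hat{\boldsymbol\sigma}^{(i)}=(\hat\sigma_x^{(i)},\hat\sigma_y^{(i)},\hat\sigma_z^{(i)})$ are the Pauli matrices of qubit $i$. For a density matrix $\hat\rho=\sum_k\lambda_k|k\rangle\langle k|$ and Hermitian $\hat A$, the quantum Fisher information is $F_Q[\hat\rho,\hat A]=2\sum_{k,l:\lambda_k+\lambda_l>0}\frac{(\lambda_k-\lambda_l)^2}{\lambda_k+\lambda_l}|\langle k|\hat A|l\rangle|^2$. A partition $\Lambda=\{A_1,\dots,A_{|\Lambda|}\}$ of $\{1,\dots,N\}$ into nonempty disjoint subsets has $|\Lambda|$ subsets of sizes $N_l=|A_l|$ and $\max\Lambda=\max_l N_l$. A state is $\Lambda$-separable if it can be written as $\sum_\gamma p_\gamma\hat\rho^{(\gamma)}_{A_1}\otimes\cdots\otimes\hat\rho^{(\gamma)}_{A_{|\Lambda|}}$ with $p_\gamma$ a probability distribution and $\hat\rho^{(\gamma)}_{A_l}$ states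 of the qubits in $A_l$. A state is $(w,h)$-separable if it is a convex combination $\sum_\Lambda P_\Lambda\hat\rho_\Lambda$ of $\Lambda$-separable states $\hat\rho_\Lambda$ over partitions $\Lambda$ with $\max\Lambda\leq w$ and $|\Lambda|\geq h$. *)

theory Defs
  imports "HOL-Analysis.Analysis"
begin

text \<open>Computational basis configurations of qubits: a configuration is a function
  nat => bool (False = |0>, True = |1>) which is False outside the given set of qubits.
  An operator on the qubits in A is a kernel cfg => cfg => complex, considered on configs A.\<close>

type_synonym cfg = "nat \<Rightarrow> bool"
type_synonym qop = "cfg \<Rightarrow> cfg \<Rightarrow> complex"

definition configs :: "nat set \<Rightarrow> cfg set" where
  "configs A = {x. \<forall>i. i \<notin> A \<longrightarrow> \<not> x i}"

definition restr :: "cfg \<Rightarrow> nat set \<Rightarrow> cfg" where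
  "restr x A = (\<lambda>i. if i \<in> A then x i else False)"

definition is_state :: "nat set \<Rightarrow> qop \<Rightarrow> bool" where
  "is_state A \<rho> \<longleftrightarrow>
     (\<forall>v :: cfg \<Rightarrow> complex.
        let q = (\<Sum>x\<in>configs A. \<Sum>y\<in>configs A. cnj (v x) * \<rho> x y * v y)
        in Im q = 0 \<and> Re q \<ge> 0)
   \<and> (\<Sum>x\<in>configs A. \<rho> x x) = 1"

definition is_partition :: "nat \<Rightarrow> nat set set \<Rightarrow> bool" where
  "is_partition N \<Lambda> \<longleftrightarrow>
     (\<forall>A\<in>\<Lambda>. A \<noteq> {}) \<and> (\<forall>A\<in>\<Lambda>. \<forall>B\<in>\<Lambda>. A \<noteq> B \<longrightarrow> A \<inter> B = {}) \<and> \<Union>\<Lambda> = {1..N}"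

definition max_block :: "nat set set \<Rightarrow> nat" where
  "max_block \<Lambda> = Max (card ` \<Lambda>)"

text \<open>Tensor product over the blocks of a partition: the kernel of the product
  of states rho_A on the blocks A.\<close>
definition prod_op :: "nat set set \<Rightarrow> (nat set \<Rightarrow> qop) \<Rightarrow> qop" where
  "prod_op \<Lambda> r = (\<lambda>x y. \<Prod>A\<in>\<Lambda>. r A (restr x A) (restr y A))"

definition sep_wrt :: "nat \<Rightarrow> nat set set \<Rightarrow> qop \<Rightarrow> bool" where
  "sep_wrt N \<Lambda> \<rho> \<longleftrightarrow>
     (\<exists>(G :: nat set) (p :: nat \<Rightarrow> real) (r :: nat \<Rightarrow> nat set \<Rightarrow> qop).
        finite G \<and> (\<forall>g\<in>G. p g \<ge> 0) \<and> (\<Sum>g\<in>G. p g) = 1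
      \<and> (\<forall>g\<in>G. \<forall>A\<in>\<Lambda>. is_state A (r g A))
      \<and> (\<forall>x\<in>configs {1..N}. \<forall>y\<in>configs {1..N}.
            \<rho> x y = (\<Sum>g\<in>G. complex_of_real (p g) * prod_op \<Lambda> (r g) x y)))"

definition wh_sep :: "nat \<Rightarrow> nat \<Rightarrow> nat \<Rightarrow> qop \<Rightarrow> bool" where
  "wh_sep N w h \<rho> \<longleftrightarrow>
     (\<exists>(K :: nat set) (P :: nat \<Rightarrow> real) (L :: nat \<Rightarrow> nat set set) (s :: nat \<Rightarrow> qop).
        finite K \<and> (\<forall>k\<in>K. P k \<ge> 0) \<and> (\<Sum>k\<in>K. P k) = 1
      \<and> (\<forall>k\<in>K. is_partition N (L k) \<and> max_block (L k) \<le> w \<and> card (L k) \<ge> h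
                 \<and> sep_wrt N (L k) (s k))
      \<and> (\<forall>x\<in>configs {1..N}. \<forall>y\<in>configs {1..N}.
            \<rho> x y = (\<Sum>k\<in>K. complex_of_real (P k) * s k x y)))"

text \<open>n . sigma as a 2x2 matrix, rows/columns indexed by bool (False = |0>, True = |1>),
  with sigma_z |0> = |0>.\<close>
definition pauli_n :: "real^3 \<Rightarrow> bool \<Rightarrow> bool \<Rightarrow> complex" where
  "pauli_n n a b =
     (if \<not> a \<and> \<not> b then complex_of_real (n$3)
      else if \<not> a \<and> b then Complex (n$1) (- n$2)
      else if a \<and> \<not> b then Complex (n$1) (n$2)
      else complex_of_real (- n$3))"

text \<open>J_n = 1/2 sum_{i=1..N} n . sigma^(i).\<close>
definition J_op :: "nat \<Rightarrow> real^3 \<Rightarrow> qop" where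
  "J_op N n = (\<lambda>x y. (1/2) * (\<Sum>i\<in>{1..N}.
      (if \<forall>j. j \<noteq> i \<longrightarrow> x j = y j then pauli_n n (x i) (y i) else 0)))"

definition is_eigdec :: "nat \<Rightarrow> qop \<Rightarrow> (cfg \<Rightarrow> cfg \<Rightarrow> complex) \<Rightarrow> (cfg \<Rightarrow> real) \<Rightarrow> bool" where
  "is_eigdec N \<rho> e lam \<longleftrightarrow>
     (\<forall>k\<in>configs {1..N}. \<forall>l\<in>configs {1..N}.
        (\<Sum>x\<in>configs {1..N}. cnj (e k x) * e l x) = (if k = l then 1 else 0))
   \<and> (\<forall>x\<in>configs {1..N}. \<forall>y\<in>configs {1..N}.
        \<rho> x y = (\<Sum>k\<in>configs {1..N}. complex_of_real (lam k) * e k x * cnj (e k y)))"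

definition melem :: "nat \<Rightarrow> (cfg \<Rightarrow> complex) \<Rightarrow> qop \<Rightarrow> (cfg \<Rightarrow> complex) \<Rightarrow> complex" where
  "melem N u A v = (\<Sum>x\<in>configs {1..N}. \<Sum>y\<in>configs {1..N}. cnj (u x) * A x y * v y)"

definition QFI :: "nat \<Rightarrow> qop \<Rightarrow> qop \<Rightarrow> real" where
  "QFI N \<rho> A =
     (let d = (SOME d. is_eigdec N \<rho> (fst d) (snd d)); e = fst d; lam = snd d in
      2 * (\<Sum>k\<in>configs {1..N}. \<Sum>l\<in>configs {1..N}.
             if lam k + lam l > 0
             then (lam k - lam l)^2 / (lam k + lam l) * (cmod (melem N (e k) A (e l)))^2
             else 0))"

end

(*
  For Hermitian X let Phi_X(sigma) = Re tr(sigma (4 i X A - X^2)), with A = J_n.  If (lambda_k, e_k) is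
  an eigendecomposition of rho, the choice X = -2i sum_{k,l} (lambda_k - lambda_l)/(lambda_k + lambda_l)
  <e_k|A|e_l> |e_k><e_l| gives Phi_X(rho) = F_Q[rho, A], so it suffices to bound every Phi_X on
  (w,h)-separable states.  Phi_X is affine in sigma, and a product of mixed states is a mixture of pure
  product states, so only pure states psi = psi_1 (x) ... (x) psi_m over a partition matter.  For these,
  pointwise AM-GM gives Phi_X(psi) <= 4 ||(A - c) psi||^2 for every real c; with c = <psi, A psi> this is
  4 Var_psi(J_n), which is the sum of the block variances, each at most N_l^2 / 4.  Finally
  sum_l N_l^2 <= sum_l (w (N_l - 1) + N_l) <= w (N - h) + N.  The hypotheses N/h <= w <= N - h + 1 only
  ensure that such partitions exist; the proof does not use them.

  The spectral theorem, needed both for the QFI and for the mixed states on the blocks, is proved by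
  induction on the index set, splitting off one eigenvector with a Householder reflection.
*)
theory Submission
  imports Defs "Jordan_Normal_Form.Spectral_Radius"
begin

(* The vector indexing notation of Jordan_Normal_Form would clash with n$i on real^3. *)
no_notation vec_index (infixl "$" 100)

section \<open>Kernels on a finite index set\<close>

definition inner_on :: "'a set \<Rightarrow> ('a \<Rightarrow> complex) \<Rightarrow> ('a \<Rightarrow> complex) \<Rightarrow> complex" where
  "inner_on S u v = (\<Sum>x\<in>S. cnj (u x) * v x)"

definition apply_on :: "'a set \<Rightarrow> ('a \<Rightarrow> 'a \<Rightarrow> complex) \<Rightarrow> ('a \<Rightarrow> complex) \<Rightarrow> 'a \<Rightarrow> complex" where
  "apply_on S K v = (\<lambda>x. \<Sum>y\<in>S. K x y * v y)"

definition op_mult :: "'a set \<Rightarrow> ('a \<Rightarrow> 'a \<Rightarrow> complex) \<Rightarrow> ('a \<Rightarrow> 'a \<Rightarrow> complex) \<Rightarrow> 'a \<Rightarrow> 'a \<Rightarrow> complex" where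
  "op_mult S A B = (\<lambda>x y. \<Sum>a\<in>S. A x a * B a y)"

definition op_adj :: "('a \<Rightarrow> 'a \<Rightarrow> complex) \<Rightarrow> 'a \<Rightarrow> 'a \<Rightarrow> complex" where
  "op_adj A = (\<lambda>x y. cnj (A y x))"

definition op_id :: "'a \<Rightarrow> 'a \<Rightarrow> complex" where
  "op_id = (\<lambda>x y. if x = y then 1 else 0)"

definition hermitian_on :: "'a set \<Rightarrow> ('a \<Rightarrow> 'a \<Rightarrow> complex) \<Rightarrow> bool" where
  "hermitian_on S K \<longleftrightarrow> (\<forall>x\<in>S. \<forall>y\<in>S. K x y = cnj (K y x))"

definition unitary_on :: "'a set \<Rightarrow> ('a \<Rightarrow> 'a \<Rightarrow> complex) \<Rightarrow> bool" where
  "unitary_on S U \<longleftrightarrow> (\<forall>x\<in>S. \<forall>y\<in>S.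
     op_mult S (op_adj U) U x y = op_id x y \<and> op_mult S U (op_adj U) x y = op_id x y)"

definition orthonormal_on :: "'a set \<Rightarrow> ('a \<Rightarrow> 'a \<Rightarrow> complex) \<Rightarrow> bool" where
  "orthonormal_on S e \<longleftrightarrow> (\<forall>k\<in>S. \<forall>l\<in>S. inner_on S (e k) (e l) = op_id k l)"

definition spectral_decomp_on ::
    "'a set \<Rightarrow> ('a \<Rightarrow> 'a \<Rightarrow> complex) \<Rightarrow> ('a \<Rightarrow> 'a \<Rightarrow> complex) \<Rightarrow> ('a \<Rightarrow> real) \<Rightarrow> bool" where
  "spectral_decomp_on S M e lam \<longleftrightarrow> orthonormal_on S e \<and>
     (\<forall>x\<in>S. \<forall>y\<in>S. M x y = (\<Sum>k\<in>S. complex_of_real (lam k) * e k x * cnj (e k y)))"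

lemma cnj_mult_self: "cnj z * z = complex_of_real ((cmod z)\<^sup>2)"
  using complex_norm_square[of z] by (simp add: mult.commute)

lemma inner_on_self: "inner_on S u u = complex_of_real (\<Sum>x\<in>S. (cmod (u x))\<^sup>2)"
  unfolding inner_on_def of_real_sum by (simp only: cnj_mult_self)

lemma inner_on_commute: "inner_on S u v = cnj (inner_on S v u)"
  unfolding inner_on_def by (simp add: mult.commute)

lemma op_id_refl [simp]: "op_id x x = 1"
  and cnj_op_id [simp]: "cnj (op_id x y) = op_id x y"
  unfolding op_id_def by auto

lemma sum_op_id_right: "finite S \<Longrightarrow> y \<in> S \<Longrightarrow> (\<Sum>a\<in>S. f a * op_id a y) = (f y :: complex)"
  unfolding op_id_def by (simp add: if_distrib cong: if_cong)

lemma sum_op_id_left: "finite S \<Longrightarrow> x \<in> S \<Longrightarrow> (\<Sum>a\<in>S. op_id x a * f a) = (f x :: complex)"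
  unfolding op_id_def by (simp add: if_distrib[of "\<lambda>c. c * f _"] cong: if_cong)

lemma sum_swap3:
  "(\<Sum>x\<in>A. \<Sum>a\<in>B. \<Sum>b\<in>C. f x a b) = (\<Sum>a\<in>B. \<Sum>b\<in>C. \<Sum>x\<in>A. (f x a b :: 'b :: comm_monoid_add))"
  by (subst sum.swap) (intro sum.cong refl sum.swap)

lemma op_mult_assoc: "op_mult S (op_mult S A B) C = op_mult S A (op_mult S B C)"
  unfolding op_mult_def
  by (auto simp: fun_eq_iff sum_distrib_left sum_distrib_right mult.assoc intro: sum.swap)

lemma op_mult_id_left: "finite S \<Longrightarrow> x \<in> S \<Longrightarrow> op_mult S op_id B x y = B x y"
  unfolding op_mult_def by (rule sum_op_id_left)

lemma op_mult_id_right: "finite S \<Longrightarrow> y \<in> S \<Longrightarrow> op_mult S A op_id x y = A x y"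
  unfolding op_mult_def by (rule sum_op_id_right)

lemma op_mult_cong:
  assumes "\<And>x a. x \<in> S \<Longrightarrow> a \<in> S \<Longrightarrow> A x a = A' x a" and "\<And>a y. a \<in> S \<Longrightarrow> y \<in> S \<Longrightarrow> B a y = B' a y"
    and "x \<in> S" and "y \<in> S"
  shows "op_mult S A B x y = op_mult S A' B' x y"
  unfolding op_mult_def using assms by (intro sum.cong) auto

lemma inner_on_diff_scaled:
  "inner_on S (\<lambda>x. p x - a * q x) (\<lambda>x. r x - b * t x)
   = inner_on S p r - b * inner_on S p t - cnj a * inner_on S q r + cnj a * b * inner_on S q t"
  unfolding inner_on_def by (simp add: algebra_simps sum.distrib sum_subtractf sum_distrib_left)

lemma inner_on_op_id:
  assumes "finite S" and "x0 \<in> S"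
  shows "inner_on S (op_id x0) u = u x0" and "inner_on S u (op_id x0) = cnj (u x0)"
    and "inner_on S (op_id x0) (op_id x0) = 1"
  using assms unfolding inner_on_def
  by (simp_all add: sum_op_id_left mult.commute[of "cnj _"] sum_op_id_right)

lemma inner_on_sum:
  "inner_on S (\<lambda>x. \<Sum>i\<in>I. u i x) (\<lambda>x. \<Sum>j\<in>J. w j x) = (\<Sum>i\<in>I. \<Sum>j\<in>J. inner_on S (u i) (w j))"
  unfolding inner_on_def cnj_sum sum_product by (subst sum_swap3) (rule refl)

lemma re_inner_on_le: "Re (inner_on S u w) \<le> (Re (inner_on S u u) + Re (inner_on S w w)) / 2"
proof -
  have pointwise: "Re (cnj a * b) \<le> ((cmod a)\<^sup>2 + (cmod b)\<^sup>2) / 2" for a b :: complex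
  proof -
    have "0 \<le> (Re a - Re b)\<^sup>2 + (Im a - Im b)\<^sup>2" by simp
    then show ?thesis unfolding cmod_power2 by (simp add: power2_eq_square algebra_simps)
  qed
  have "Re (inner_on S u w) \<le> (\<Sum>x\<in>S. ((cmod (u x))\<^sup>2 + (cmod (w x))\<^sup>2) / 2)"
    unfolding inner_on_def Re_sum by (intro sum_mono pointwise)
  also have "\<dots> = (Re (inner_on S u u) + Re (inner_on S w w)) / 2"
    unfolding inner_on_self by (simp only: sum_divide_distrib[symmetric] sum.distrib Re_complex_of_real)
  finally show ?thesis .
qed

lemma re_inner_on_sum_blockwise_le:
  assumes fin: "finite L" "\<forall>A\<in>L. finite A" and disj: "\<forall>A\<in>L. \<forall>B\<in>L. A \<noteq> B \<longrightarrow> A \<inter> B = {}"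
    and orth: "\<And>A B i j. A \<in> L \<Longrightarrow> B \<in> L \<Longrightarrow> A \<noteq> B \<Longrightarrow> i \<in> A \<Longrightarrow> j \<in> B \<Longrightarrow> inner_on S (u i) (u j) = 0"
    and bound: "\<And>i. i \<in> \<Union>L \<Longrightarrow> Re (inner_on S (u i) (u i)) \<le> r"
  shows "Re (inner_on S (\<lambda>x. \<Sum>i\<in>(\<Union>L). u i x) (\<lambda>x. \<Sum>i\<in>(\<Union>L). u i x)) \<le> r * (\<Sum>A\<in>L. (real (card A))\<^sup>2)"
proof -
  have same_block: "(\<Sum>j\<in>(\<Union>L). Re (inner_on S (u i) (u j))) = (\<Sum>j\<in>A. Re (inner_on S (u i) (u j)))"
    if A: "A \<in> L" and i: "i \<in> A" for A i
  proof (rule sum.mono_neutral_right)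
    show "finite (\<Union>L)" using fin by blast
    show "A \<subseteq> \<Union>L" using A by blast
    show "\<forall>j\<in>\<Union>L - A. Re (inner_on S (u i) (u j)) = 0"
      using orth[OF A _ _ i] A by (metis DiffE UnionE zero_complex.simps(1))
  qed
  have pair: "Re (inner_on S (u i) (u j)) \<le> r" if "i \<in> \<Union>L" "j \<in> \<Union>L" for i j
    using re_inner_on_le[of S "u i" "u j"] bound[OF that(1)] bound[OF that(2)] by auto
  have "Re (inner_on S (\<lambda>x. \<Sum>i\<in>(\<Union>L). u i x) (\<lambda>x. \<Sum>i\<in>(\<Union>L). u i x))
      = (\<Sum>i\<in>(\<Union>L). \<Sum>j\<in>(\<Union>L). Re (inner_on S (u i) (u j)))"
    unfolding inner_on_sum Re_sum ..
  also have "\<dots> = (\<Sum>A\<in>L. \<Sum>i\<in>A. \<Sum>j\<in>(\<Union>L). Re (inner_on S (u i) (u j)))"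
    by (subst sum.Union_disjoint[OF fin(2) disj]) simp
  also have "\<dots> = (\<Sum>A\<in>L. \<Sum>i\<in>A. \<Sum>j\<in>A. Re (inner_on S (u i) (u j)))"
    by (simp add: same_block)
  also have "\<dots> \<le> (\<Sum>A\<in>L. \<Sum>i\<in>A. \<Sum>j\<in>A. r)"
    using pair by (intro sum_mono) blast
  also have "\<dots> = r * (\<Sum>A\<in>L. (real (card A))\<^sup>2)"
    by (simp add: sum_distrib_left power2_eq_square ac_simps)
  finally show ?thesis .
qed

lemma inner_on_lincomb_left:
  "inner_on S (\<lambda>x. \<Sum>k\<in>K. a k * e k x) w = (\<Sum>k\<in>K. cnj (a k) * inner_on S (e k) w)"
  unfolding inner_on_def cnj_sum sum_distrib_right sum_distrib_left
  by (subst sum.swap) (simp add: ac_simps)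

lemma inner_on_lincomb:
  assumes "finite S" and "orthonormal_on S e"
  shows "inner_on S (\<lambda>x. \<Sum>k\<in>S. a k * e k x) (\<lambda>x. \<Sum>k\<in>S. b k * e k x) = (\<Sum>k\<in>S. cnj (a k) * b k)"
proof -
  have "inner_on S (e k) (\<lambda>x. \<Sum>l\<in>S. b l * e l x) = (\<Sum>l\<in>S. op_id k l * b l)" if "k \<in> S" for k
  proof -
    have "inner_on S (e k) (\<lambda>x. \<Sum>l\<in>S. b l * e l x) = (\<Sum>l\<in>S. b l * inner_on S (e k) (e l))"
      unfolding inner_on_def sum_distrib_left by (subst sum.swap) (simp add: ac_simps)
    also have "\<dots> = (\<Sum>l\<in>S. op_id k l * b l)"
      using assms(2) that unfolding orthonormal_on_def by (intro sum.cong) (simp_all add: mult.commute)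
    finally show ?thesis .
  qed
  then show ?thesis
    unfolding inner_on_lincomb_left using assms(1) by (simp add: sum_op_id_left)
qed

lemma apply_on_basis_expansion:
  assumes "finite S" and "orthonormal_on S e" and "m \<in> S"
  shows "apply_on S (\<lambda>x y. \<Sum>k\<in>S. \<Sum>l\<in>S. C k l * e k x * cnj (e l y)) (e m) x = (\<Sum>k\<in>S. C k m * e k x)"
proof -
  have "apply_on S (\<lambda>x y. \<Sum>k\<in>S. \<Sum>l\<in>S. C k l * e k x * cnj (e l y)) (e m) x
      = (\<Sum>k\<in>S. \<Sum>l\<in>S. C k l * e k x * inner_on S (e l) (e m))"
    unfolding apply_on_def inner_on_def sum_distrib_right sum_distrib_left
    by (subst sum_swap3) (simp add: ac_simps)
  also have "\<dots> = (\<Sum>k\<in>S. \<Sum>l\<in>S. C k l * e k x * op_id l m)"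
    using assms(2,3) unfolding orthonormal_on_def by (intro sum.cong refl) simp
  finally show ?thesis
    using assms(1,3) by (simp add: sum_op_id_right)
qed

lemma inner_on_apply_hermitian:
  assumes "hermitian_on S A"
  shows "inner_on S u (apply_on S A v) = inner_on S (apply_on S A u) v"
proof -
  have "inner_on S u (apply_on S A v) = (\<Sum>x\<in>S. \<Sum>y\<in>S. cnj (u x) * A x y * v y)"
    unfolding inner_on_def apply_on_def by (simp add: sum_distrib_left mult.assoc)
  also have "\<dots> = (\<Sum>x\<in>S. \<Sum>y\<in>S. cnj (A y x * u x) * v y)"
  proof (intro sum.cong refl)
    fix x y assume "x \<in> S" "y \<in> S"
    then have "A x y = cnj (A y x)" using assms unfolding hermitian_on_def by blast
    then show "cnj (u x) * A x y * v y = cnj (A y x * u x) * v y" by simp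
  qed
  also have "\<dots> = inner_on S (apply_on S A u) v"
    unfolding inner_on_def apply_on_def cnj_sum sum_distrib_right by (rule sum.swap)
  finally show ?thesis .
qed

lemma hermitian_on_inner_apply_real:
  assumes "hermitian_on S M"
  shows "Im (inner_on S u (apply_on S M u)) = 0"
proof -
  have "inner_on S u (apply_on S M u) = inner_on S (apply_on S M u) u"
    by (rule inner_on_apply_hermitian[OF assms])
  also have "\<dots> = cnj (inner_on S u (apply_on S M u))"
    by (rule inner_on_commute)
  finally have "Im (inner_on S u (apply_on S M u)) = - Im (inner_on S u (apply_on S M u))"
    by (metis cnj.sel(2))
  then show ?thesis by linarith
qed

lemma hermitian_matrix_element_swap:
  assumes "hermitian_on S A"
  shows "inner_on S v (apply_on S A u) = cnj (inner_on S u (apply_on S A v))"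
  unfolding inner_on_apply_hermitian[OF assms, of v] by (rule inner_on_commute)

lemma hermitian_on_basis_expansion:
  assumes "\<forall>k\<in>S. \<forall>l\<in>S. C l k = cnj (C k l)"
  shows "hermitian_on S (\<lambda>x y. \<Sum>k\<in>S. \<Sum>l\<in>S. C k l * e k x * cnj (e l y))"
proof -
  have "cnj (\<Sum>k\<in>S. \<Sum>l\<in>S. C k l * e k y * cnj (e l x)) = (\<Sum>l\<in>S. \<Sum>k\<in>S. C l k * e l x * cnj (e k y))" for x y
  proof -
    have "cnj (\<Sum>k\<in>S. \<Sum>l\<in>S. C k l * e k y * cnj (e l x)) = (\<Sum>k\<in>S. \<Sum>l\<in>S. cnj (C k l) * cnj (e k y) * e l x)"
      by simp
    also have "\<dots> = (\<Sum>k\<in>S. \<Sum>l\<in>S. C l k * e l x * cnj (e k y))"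
    proof (intro sum.cong refl)
      fix k l assume "k \<in> S" "l \<in> S"
      then have "cnj (C k l) = C l k" using assms by metis
      then show "cnj (C k l) * cnj (e k y) * e l x = C l k * e l x * cnj (e k y)"
        by (simp add: ac_simps)
    qed
    finally show ?thesis by (subst sum.swap)
  qed
  then show ?thesis unfolding hermitian_on_def by simp
qed

lemma hermitian_on_conj:
  assumes "hermitian_on S M"
  shows "hermitian_on S (op_mult S (op_adj U) (op_mult S M U))"
proof -
  have "op_mult S (op_adj U) (op_mult S M U) x y = cnj (op_mult S (op_adj U) (op_mult S M U) y x)"
    if "x \<in> S" "y \<in> S" for x y
  proof -
    have "cnj (op_mult S (op_adj U) (op_mult S M U) y x)
        = (\<Sum>a\<in>S. \<Sum>b\<in>S. U a y * (cnj (M a b) * cnj (U b x)))"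
      unfolding op_mult_def op_adj_def by (simp only: cnj_sum complex_cnj_mult complex_cnj_cnj sum_distrib_left)
    also have "\<dots> = (\<Sum>b\<in>S. \<Sum>a\<in>S. cnj (U b x) * (M b a * U a y))"
    proof (subst sum.swap, intro sum.cong refl)
      fix a b assume "a \<in> S" "b \<in> S"
      then have "M b a = cnj (M a b)" using assms unfolding hermitian_on_def by blast
      then show "U a y * (cnj (M a b) * cnj (U b x)) = cnj (U b x) * (M b a * U a y)"
        by (simp add: ac_simps)
    qed
    also have "\<dots> = op_mult S (op_adj U) (op_mult S M U) x y"
      unfolding op_mult_def op_adj_def by (simp only: sum_distrib_left)
    finally show ?thesis by simp
  qed
  then show ?thesis unfolding hermitian_on_def by blast
qed

lemma quadratic_form_two_points:
  fixes a b :: complex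
  assumes fin: "finite S" and x: "x \<in> S" and y: "y \<in> S"
  shows "(\<Sum>z\<in>S. \<Sum>z'\<in>S. cnj (a * op_id z x + b * op_id z y) * \<sigma> z z' * (a * op_id z' x + b * op_id z' y))
       = cnj a * a * \<sigma> x x + cnj a * b * \<sigma> x y + cnj b * a * \<sigma> y x + cnj b * b * \<sigma> y y"
proof -
  have inner: "(\<Sum>z'\<in>S. \<sigma> z z' * (a * op_id z' x + b * op_id z' y)) = a * \<sigma> z x + b * \<sigma> z y" for z
  proof -
    have "(\<Sum>z'\<in>S. \<sigma> z z' * (a * op_id z' x + b * op_id z' y))
        = (\<Sum>z'\<in>S. (a * \<sigma> z z') * op_id z' x + (b * \<sigma> z z') * op_id z' y)"
      by (intro sum.cong) (simp_all add: algebra_simps)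
    then show ?thesis
      by (simp only: sum.distrib sum_op_id_right[OF fin x] sum_op_id_right[OF fin y])
  qed
  have "(\<Sum>z\<in>S. \<Sum>z'\<in>S. cnj (a * op_id z x + b * op_id z y) * \<sigma> z z' * (a * op_id z' x + b * op_id z' y))
      = (\<Sum>z\<in>S. cnj (a * op_id z x + b * op_id z y) * (a * \<sigma> z x + b * \<sigma> z y))"
    by (simp only: mult.assoc sum_distrib_left[symmetric] inner)
  also have "\<dots> = (\<Sum>z\<in>S. (cnj a * (a * \<sigma> z x + b * \<sigma> z y)) * op_id z x
                         + (cnj b * (a * \<sigma> z x + b * \<sigma> z y)) * op_id z y)"
    by (intro sum.cong) (simp_all add: algebra_simps)
  also have "\<dots> = cnj a * a * \<sigma> x x + cnj a * b * \<sigma> x y + cnj b * a * \<sigma> y x + cnj b * b * \<sigma> y y"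
    by (simp only: sum.distrib sum_op_id_right[OF fin x] sum_op_id_right[OF fin y]) (simp add: algebra_simps)
  finally show ?thesis .
qed

lemma hermitian_on_if_quadratic_form_real:
  assumes fin: "finite S"
    and real: "\<And>v. Im (\<Sum>x\<in>S. \<Sum>y\<in>S. cnj (v x) * \<sigma> x y * v y) = 0"
  shows "hermitian_on S \<sigma>"
  unfolding hermitian_on_def
proof (intro ballI)
  fix x y assume x: "x \<in> S" and y: "y \<in> S"
  have im: "Im (cnj a * a * \<sigma> u u + cnj a * b * \<sigma> u u' + cnj b * a * \<sigma> u' u + cnj b * b * \<sigma> u' u') = 0"
    if "u \<in> S" "u' \<in> S" for a b u u'
    using real[of "\<lambda>z. a * op_id z u + b * op_id z u'"]
    unfolding quadratic_form_two_points[OF fin that] .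
  have diag: "Im (\<sigma> x x) = 0" "Im (\<sigma> y y) = 0"
    using im[OF x x, of 1 0] im[OF y y, of 1 0] by simp_all
  have "Im (\<sigma> x y + \<sigma> y x) = 0"
    using im[OF x y, of 1 1] diag by simp
  moreover have "Re (\<sigma> x y) - Re (\<sigma> y x) = 0"
    using im[OF x y, of 1 \<i>] diag by simp
  ultimately show "\<sigma> x y = cnj (\<sigma> y x)" by (simp add: complex_eq_iff)
qed

section \<open>The spectral theorem for Hermitian kernels\<close>

lemma eigenvector_exists:
  assumes "finite S" and "S \<noteq> {}"
  obtains u c where "\<exists>x\<in>S. u x \<noteq> 0" and "\<forall>x\<in>S. apply_on S M u x = c * u x"
proof -
  define n where "n = card S"
  obtain g where g: "bij_betw g {0..<n} S"
    using ex_bij_betw_nat_finite[OF assms(1)] n_def by auto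
  define A where "A = mat n n (\<lambda>(i, j). M (g i) (g j))"
  have A: "A \<in> carrier_mat n n" by (simp add: A_def)
  have "n > 0" using assms n_def by (simp add: card_gt_0_iff)
  from spectrum_non_empty[OF A this] obtain c where "eigenvalue A c"
    unfolding spectrum_def by auto
  then obtain v where "eigenvector A v c" unfolding eigenvalue_def by auto
  then have v: "v \<in> carrier_vec n" "v \<noteq> 0\<^sub>v n" "A *\<^sub>v v = c \<cdot>\<^sub>v v"
    unfolding eigenvector_def using A by auto
  define gi where "gi = the_inv_into {0..<n} g"
  have gi: "g (gi x) = x" "gi x < n" if "x \<in> S" for x
    using g that unfolding gi_def bij_betw_def by (auto simp: f_the_inv_into_f the_inv_into_f_f)
  have gi_g: "gi (g j) = j" if "j < n" for j
    using g that unfolding gi_def bij_betw_def by (simp add: the_inv_into_f_f)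
  define u where "u = (\<lambda>x. vec_index v (gi x))"
  show ?thesis
  proof
    from v(1,2) obtain i where "i < n" "vec_index v i \<noteq> 0"
      by (metis carrier_vecD eq_vecI index_zero_vec)
    then show "\<exists>x\<in>S. u x \<noteq> 0"
      using gi_g g unfolding u_def bij_betw_def by (intro bexI[of _ "g i"]) auto
    show "\<forall>x\<in>S. apply_on S M u x = c * u x"
    proof
      fix x assume x: "x \<in> S"
      have "apply_on S M u x = (\<Sum>j\<in>{0..<n}. M x (g j) * u (g j))"
        unfolding apply_on_def by (rule sum.reindex_bij_betw[OF g, symmetric])
      also have "\<dots> = (\<Sum>j\<in>{0..<n}. A $$ (gi x, j) * vec_index v j)"
        using gi_g gi[OF x] by (intro sum.cong) (auto simp: A_def u_def)
      also have "\<dots> = vec_index (A *\<^sub>v v) (gi x)"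
        using A v(1) gi[OF x] by (simp add: mult_mat_vec_def scalar_prod_def)
      also have "\<dots> = c * u x"
        using v(1,3) gi[OF x] by (simp add: u_def)
      finally show "apply_on S M u x = c * u x" .
    qed
  qed
qed

lemma unit_eigenvector_exists:
  assumes "finite S" and "S \<noteq> {}"
  obtains u c where "inner_on S u u = 1" and "\<forall>x\<in>S. apply_on S M u x = c * u x"
proof -
  obtain u c where nz: "\<exists>x\<in>S. u x \<noteq> 0" and eig: "\<forall>x\<in>S. apply_on S M u x = c * u x"
    using eigenvector_exists[OF assms] .
  define q where "q = (\<Sum>x\<in>S. (cmod (u x))\<^sup>2)"
  have "q > 0"
  proof -
    from nz obtain x where "x \<in> S" "u x \<noteq> 0" by blast
    then show ?thesis
      unfolding q_def using assms(1) by (intro sum_pos2[where i = x]) auto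
  qed
  define u' where "u' = (\<lambda>x. u x / complex_of_real (sqrt q))"
  show ?thesis
  proof
    show "inner_on S u' u' = 1"
      unfolding inner_on_self u'_def using \<open>q > 0\<close>
      by (simp add: norm_divide power_divide sum_divide_distrib[symmetric] q_def[symmetric])
    show "\<forall>x\<in>S. apply_on S M u' x = c * u' x"
      using eig unfolding apply_on_def u'_def by (simp add: sum_divide_distrib[symmetric])
  qed
qed

lemma hermitian_unit_eigenvector_exists:
  assumes fin: "finite S" and "S \<noteq> {}" and M: "hermitian_on S M"
  obtains u and c :: real where "inner_on S u u = 1" and "\<forall>x\<in>S. apply_on S M u x = complex_of_real c * u x"
proof -
  obtain u c where unit: "inner_on S u u = 1" and eig: "\<forall>x\<in>S. apply_on S M u x = c * u x"
    using unit_eigenvector_exists[OF assms(1,2)] .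
  have "inner_on S u (apply_on S M u) = (\<Sum>x\<in>S. c * (cnj (u x) * u x))"
    unfolding inner_on_def using eig by (intro sum.cong) (simp_all add: ac_simps)
  then have "c = inner_on S u (apply_on S M u)"
    using unit unfolding inner_on_def by (simp add: sum_distrib_left[symmetric])
  then have "c = complex_of_real (Re c)"
    using hermitian_on_inner_apply_real[OF M] by (simp add: complex_eq_iff)
  then show ?thesis using that unit eig by metis
qed

lemma householder_involution:
  fixes w :: "'a \<Rightarrow> complex"
  assumes fin: "finite S"
  defines "s \<equiv> \<Sum>x\<in>S. (cmod (w x))\<^sup>2"
  defines "H \<equiv> \<lambda>x y. op_id x y - complex_of_real (if s = 0 then 0 else 2 / s) * w x * cnj (w y)"
  shows "hermitian_on S H" and "\<And>x y. x \<in> S \<Longrightarrow> y \<in> S \<Longrightarrow> op_mult S H H x y = op_id x y"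
proof -
  define c where "c = complex_of_real (if s = 0 then 0 else 2 / s)"
  show "hermitian_on S H"
    unfolding hermitian_on_def H_def op_id_def by simp
  have c: "2 * c - c\<^sup>2 * inner_on S w w = 0"
    unfolding c_def inner_on_self s_def[symmetric] by (simp add: power2_eq_square field_simps)
  fix x y assume "x \<in> S" "y \<in> S"
  have "H x a * H a y = op_id x a * op_id a y - op_id x a * (c * w a * cnj (w y))
      - (c * w x * cnj (w a)) * op_id a y + c\<^sup>2 * w x * cnj (w y) * (cnj (w a) * w a)" for a
    unfolding H_def c_def[symmetric] by (simp add: algebra_simps power2_eq_square)
  then have "op_mult S H H x y = (\<Sum>a\<in>S. op_id x a * op_id a y) - (\<Sum>a\<in>S. op_id x a * (c * w a * cnj (w y)))
      - (\<Sum>a\<in>S. (c * w x * cnj (w a)) * op_id a y) + c\<^sup>2 * w x * cnj (w y) * inner_on S w w"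
    unfolding op_mult_def inner_on_def by (simp only: sum.distrib sum_subtractf sum_distrib_left)
  also have "\<dots> = op_id x y - (2 * c - c\<^sup>2 * inner_on S w w) * w x * cnj (w y)"
    using fin \<open>x \<in> S\<close> \<open>y \<in> S\<close> by (simp only: sum_op_id_left sum_op_id_right) (simp add: algebra_simps)
  finally show "op_mult S H H x y = op_id x y"
    unfolding c by simp
qed

lemma unitary_on_scaled_involution:
  assumes "cnj \<alpha> * \<alpha> = 1" and "hermitian_on S H"
    and "\<And>x y. x \<in> S \<Longrightarrow> y \<in> S \<Longrightarrow> op_mult S H H x y = op_id x y"
  shows "unitary_on S (\<lambda>x y. \<alpha> * H x y)"
proof -
  have "cnj (\<alpha> * H a x) * (\<alpha> * H a y) = H x a * H a y" and "\<alpha> * H x a * cnj (\<alpha> * H y a) = H x a * H a y"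
    if "x \<in> S" "y \<in> S" "a \<in> S" for x y a
  proof -
    have "cnj (H a x) = H x a" and "cnj (H y a) = H a y"
      using assms(2) that unfolding hermitian_on_def by (metis complex_cnj_cnj)+
    then show "cnj (\<alpha> * H a x) * (\<alpha> * H a y) = H x a * H a y" and "\<alpha> * H x a * cnj (\<alpha> * H y a) = H x a * H a y"
      using assms(1) by (simp_all add: ac_simps)
  qed
  then have "op_mult S (op_adj (\<lambda>x y. \<alpha> * H x y)) (\<lambda>x y. \<alpha> * H x y) x y = op_mult S H H x y"
    and "op_mult S (\<lambda>x y. \<alpha> * H x y) (op_adj (\<lambda>x y. \<alpha> * H x y)) x y = op_mult S H H x y"
    if "x \<in> S" "y \<in> S" for x y
    using that unfolding op_mult_def op_adj_def by (auto intro: sum.cong)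
  then show ?thesis
    unfolding unitary_on_def using assms(3) by simp
qed

text \<open>A Householder reflection, rotated by the phase \<open>\<alpha>\<close> of \<open>u x0\<close>, maps the basis vector at \<open>x0\<close> to \<open>u\<close>.\<close>

lemma unitary_with_column:
  assumes fin: "finite S" and x0: "x0 \<in> S" and unit: "inner_on S u u = 1"
  obtains U where "unitary_on S U" and "\<forall>x\<in>S. U x x0 = u x"
proof -
  define r where "r = cmod (u x0)"
  define \<alpha> where "\<alpha> = (if u x0 = 0 then 1 else u x0 / complex_of_real r)"
  have "cmod \<alpha> = 1"
    unfolding \<alpha>_def r_def by (simp add: norm_divide)
  then have \<alpha>_unit: "cnj \<alpha> * \<alpha> = 1" and \<alpha>_unit': "\<alpha> * cnj \<alpha> = 1"
    using cnj_mult_self[of \<alpha>] by (simp_all add: mult.commute)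
  have u_x0: "u x0 = \<alpha> * complex_of_real r"
    unfolding \<alpha>_def r_def by simp
  define w where "w = (\<lambda>x. u x - \<alpha> * op_id x0 x)"
  define s where "s = (\<Sum>x\<in>S. (cmod (w x))\<^sup>2)"
  define H where "H = (\<lambda>x y. op_id x y - complex_of_real (if s = 0 then 0 else 2 / s) * w x * cnj (w y))"
  have "complex_of_real s = 1 - \<alpha> * cnj (u x0) - cnj \<alpha> * u x0 + cnj \<alpha> * \<alpha>"
    unfolding s_def inner_on_self[symmetric] w_def inner_on_diff_scaled inner_on_op_id[OF fin x0] unit by simp
  then have "complex_of_real s = complex_of_real (2 - 2 * r)"
    unfolding u_x0 by (simp add: mult.assoc[symmetric] \<alpha>_unit \<alpha>_unit')
  then have s: "s = 2 - 2 * r"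
    by (simp only: of_real_eq_iff)
  have H_herm: "hermitian_on S H" and H_square: "\<And>x y. x \<in> S \<Longrightarrow> y \<in> S \<Longrightarrow> op_mult S H H x y = op_id x y"
    unfolding H_def s_def by (rule householder_involution[OF fin])+
  have H_col: "H x x0 = cnj \<alpha> * u x" if "x \<in> S" for x
  proof (cases "s = 0")
    case True
    then have "w x = 0" unfolding s_def using fin that by (simp add: sum_nonneg_eq_0_iff)
    then have "u x = \<alpha> * op_id x0 x" unfolding w_def by simp
    then show ?thesis
      using \<alpha>_unit True unfolding H_def by (simp add: mult.assoc[symmetric] op_id_def)
  next
    case False
    have scaled_w_x0: "complex_of_real (2 / s) * cnj (w x0) = - cnj \<alpha>"
      using False unfolding s w_def u_x0 by (simp add: field_simps)
    have "H x x0 = op_id x x0 - w x * (complex_of_real (2 / s) * cnj (w x0))"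
      unfolding H_def if_not_P[OF False] by (simp only: mult.commute mult.left_commute)
    also have "\<dots> = op_id x x0 + cnj \<alpha> * w x"
      unfolding scaled_w_x0 by simp
    also have "\<dots> = cnj \<alpha> * u x"
      using \<alpha>_unit unfolding w_def op_id_def by (simp add: right_diff_distrib mult.assoc[symmetric])
    finally show ?thesis .
  qed
  show ?thesis
  proof
    show "unitary_on S (\<lambda>x y. \<alpha> * H x y)"
      using \<alpha>_unit H_herm H_square by (rule unitary_on_scaled_involution)
    show "\<forall>x\<in>S. \<alpha> * H x x0 = u x"
      using H_col \<alpha>_unit' by (simp add: mult.assoc[symmetric])
  qed
qed

lemma inner_on_unitary:
  assumes "finite S" and "unitary_on S U"
  shows "inner_on S (apply_on S U u) (apply_on S U v) = inner_on S u v"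
proof -
  have pointwise: "cnj (U x a * u a) * (U x b * v b) = cnj (u a) * v b * (cnj (U x a) * U x b)" for x a b
    by (simp add: ac_simps)
  have "inner_on S (apply_on S U u) (apply_on S U v)
      = (\<Sum>x\<in>S. \<Sum>a\<in>S. \<Sum>b\<in>S. cnj (U x a * u a) * (U x b * v b))"
    unfolding inner_on_def apply_on_def by (simp only: cnj_sum sum_product)
  also have "\<dots> = (\<Sum>a\<in>S. \<Sum>b\<in>S. cnj (u a) * v b * op_mult S (op_adj U) U a b)"
    unfolding pointwise op_mult_def op_adj_def by (subst sum_swap3) (simp only: sum_distrib_left)
  also have "\<dots> = (\<Sum>a\<in>S. \<Sum>b\<in>S. op_id a b * (cnj (u a) * v b))"
    using assms(2) unfolding unitary_on_def by (intro sum.cong refl) (simp add: mult.commute)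
  also have "\<dots> = inner_on S u v"
    unfolding inner_on_def using assms(1) by (simp add: sum_op_id_left)
  finally show ?thesis .
qed

lemma spectral_decomp_on_unitary_conj:
  assumes fin: "finite S" and U: "unitary_on S U"
    and dec: "spectral_decomp_on S (op_mult S (op_adj U) (op_mult S M U)) e lam"
  shows "spectral_decomp_on S M (\<lambda>k. apply_on S U (e k)) lam"
proof -
  define M' where "M' = op_mult S (op_adj U) (op_mult S M U)"
  have "(\<Sum>k\<in>S. complex_of_real (lam k) * apply_on S U (e k) x * cnj (apply_on S U (e k) y)) = M x y"
    if "x \<in> S" "y \<in> S" for x y
  proof -
    have "(\<Sum>k\<in>S. complex_of_real (lam k) * apply_on S U (e k) x * cnj (apply_on S U (e k) y))
        = (\<Sum>k\<in>S. \<Sum>a\<in>S. \<Sum>b\<in>S. U x a * (complex_of_real (lam k) * e k a * cnj (e k b)) * cnj (U y b))"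
      unfolding apply_on_def cnj_sum sum_product by (simp add: sum_distrib_left ac_simps)
    also have "\<dots> = (\<Sum>a\<in>S. \<Sum>b\<in>S. U x a * M' a b * cnj (U y b))"
      using dec unfolding spectral_decomp_on_def M'_def[symmetric]
      by (subst sum_swap3) (simp add: sum_distrib_left[symmetric] sum_distrib_right[symmetric])
    also have "\<dots> = op_mult S U (op_mult S M' (op_adj U)) x y"
      unfolding op_mult_def op_adj_def by (simp add: sum_distrib_left mult.assoc)
    also have "\<dots> = op_mult S (op_mult S U (op_adj U)) (op_mult S M (op_mult S U (op_adj U))) x y"
      unfolding M'_def by (simp add: op_mult_assoc)
    also have "\<dots> = op_mult S op_id (op_mult S M op_id) x y"
      using U that unfolding unitary_on_def by (intro op_mult_cong op_mult_cong[OF refl]) auto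
    also have "\<dots> = M x y"
      using fin that by (simp add: op_mult_id_left op_mult_id_right)
    finally show ?thesis .
  qed
  then show ?thesis
    using dec inner_on_unitary[OF fin U]
    unfolding spectral_decomp_on_def orthonormal_on_def by auto
qed

lemma unitary_conj_eigencolumn:
  assumes fin: "finite S" and x0: "x0 \<in> S" and M: "hermitian_on S M" and U: "unitary_on S U"
    and U_col: "\<forall>x\<in>S. U x x0 = u x" and eig: "\<forall>x\<in>S. apply_on S M u x = complex_of_real c * u x"
  defines "M' \<equiv> op_mult S (op_adj U) (op_mult S M U)"
  shows "\<And>x. x \<in> S \<Longrightarrow> M' x x0 = complex_of_real c * op_id x x0"
    and "\<And>y. y \<in> S \<Longrightarrow> M' x0 y = complex_of_real c * op_id x0 y"
proof -
  show col: "M' x x0 = complex_of_real c * op_id x x0" if "x \<in> S" for x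
  proof -
    have "op_mult S M U a x0 = complex_of_real c * U a x0" if "a \<in> S" for a
      using eig U_col that unfolding op_mult_def apply_on_def by (simp cong: sum.cong)
    then have "M' x x0 = complex_of_real c * op_mult S (op_adj U) U x x0"
      unfolding M'_def op_mult_def by (simp add: sum_distrib_left ac_simps cong: sum.cong)
    then show ?thesis
      using U that x0 unfolding unitary_on_def by simp
  qed
  show "M' x0 y = complex_of_real c * op_id x0 y" if "y \<in> S" for y
  proof -
    have "M' x0 y = cnj (M' y x0)"
      using hermitian_on_conj[OF M] that x0 unfolding M'_def hermitian_on_def by blast
    then show ?thesis
      unfolding col[OF that] by (simp add: op_id_def)
  qed
qed

lemma spectral_decomp_on_insert:
  assumes fin: "finite S" and x0: "x0 \<notin> S" and dec: "spectral_decomp_on S M e lam"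
    and col: "\<And>x. x \<in> insert x0 S \<Longrightarrow> M x x0 = complex_of_real c * op_id x x0"
    and row: "\<And>y. y \<in> insert x0 S \<Longrightarrow> M x0 y = complex_of_real c * op_id x0 y"
  shows "spectral_decomp_on (insert x0 S) M
           (\<lambda>k x. if k = x0 then op_id x0 x else if x = x0 then 0 else e k x) (lam(x0 := c))"
    (is "spectral_decomp_on _ M ?e ?lam")
proof -
  have e_S: "?e k x = e k x" if "k \<in> S" "x \<in> S" for k x
    using that x0 by auto
  have e_x0: "?e k x0 = 0" and e0_S: "?e x0 x = 0" if "k \<in> S" "x \<in> S" for k x
    using that x0 by (auto simp: op_id_def)
  have "inner_on (insert x0 S) (?e k) (?e l) = op_id k l" if "k \<in> insert x0 S" "l \<in> insert x0 S" for k l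
  proof -
    have split: "inner_on (insert x0 S) (?e k) (?e l) = cnj (?e k x0) * ?e l x0 + inner_on S (?e k) (?e l)"
      unfolding inner_on_def using fin x0 by simp
    have "inner_on S (?e k) (?e l) = (if k \<in> S \<and> l \<in> S then op_id k l else 0)"
      using dec that e_S e0_S unfolding spectral_decomp_on_def orthonormal_on_def inner_on_def
      by (auto intro!: sum.neutral)
    then show ?thesis
      unfolding split using that x0 e_x0 by (auto simp: op_id_def)
  qed
  moreover have "M x y = (\<Sum>k\<in>insert x0 S. complex_of_real (?lam k) * ?e k x * cnj (?e k y))"
    if "x \<in> insert x0 S" "y \<in> insert x0 S" for x y
  proof -
    have "(\<Sum>k\<in>S. complex_of_real (?lam k) * ?e k x * cnj (?e k y))
        = (\<Sum>k\<in>S. complex_of_real (lam k) * ?e k x * cnj (?e k y))"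
      using x0 by (intro sum.cong) auto
    then have split: "(\<Sum>k\<in>insert x0 S. complex_of_real (?lam k) * ?e k x * cnj (?e k y))
        = complex_of_real c * op_id x0 x * op_id x0 y
          + (\<Sum>k\<in>S. complex_of_real (lam k) * ?e k x * cnj (?e k y))"
      using fin x0 by simp
    show ?thesis
    proof (cases "x = x0 \<or> y = x0")
      case True
      then show ?thesis
        unfolding split using col row that e_x0 by (auto simp: op_id_def)
    next
      case False
      then have "x \<in> S" "y \<in> S" using that by auto
      then show ?thesis
        unfolding split using dec e_S False unfolding spectral_decomp_on_def by (auto simp: op_id_def)
    qed
  qed
  ultimately show ?thesis
    unfolding spectral_decomp_on_def orthonormal_on_def by blast
qed

text \<open>Conjugating by a unitary whose column \<open>x0\<close> is a unit eigenvector makes row and column \<open>x0\<close>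
  diagonal; the remaining block is decomposed by induction.\<close>

theorem hermitian_spectral_decomp:
  assumes "finite S" and "hermitian_on S M"
  shows "\<exists>e lam. spectral_decomp_on S M e lam"
  using assms
proof (induction S arbitrary: M rule: finite_induct)
  case empty
  show ?case unfolding spectral_decomp_on_def orthonormal_on_def by simp
next
  case (insert x0 S M)
  define S' where "S' = insert x0 S"
  have fin: "finite S'" and x0: "x0 \<in> S'" and M: "hermitian_on S' M"
    unfolding S'_def using insert by auto
  obtain u c where unit: "inner_on S' u u = 1" and eig: "\<forall>x\<in>S'. apply_on S' M u x = complex_of_real c * u x"
    using hermitian_unit_eigenvector_exists[OF fin _ M] x0 by blast
  obtain U where U: "unitary_on S' U" and U_col: "\<forall>x\<in>S'. U x x0 = u x"
    using unitary_with_column[OF fin x0 unit] .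
  define M' where "M' = op_mult S' (op_adj U) (op_mult S' M U)"
  have "hermitian_on S M'"
    using hermitian_on_conj[OF M] unfolding M'_def hermitian_on_def S'_def by blast
  then obtain e lam where "spectral_decomp_on S M' e lam"
    using insert.IH by blast
  then have "spectral_decomp_on S' M'
      (\<lambda>k x. if k = x0 then op_id x0 x else if x = x0 then 0 else e k x) (lam(x0 := c))"
    unfolding S'_def M'_def using insert.hyps unitary_conj_eigencolumn[OF fin x0 M U U_col eig]
    by (intro spectral_decomp_on_insert) (auto simp: S'_def)
  then show ?case
    unfolding S'_def[symmetric] M'_def using spectral_decomp_on_unitary_conj[OF fin U] by blast
qed

lemma spectral_decomp_on_apply:
  assumes "finite S" and "spectral_decomp_on S M e lam" and "m \<in> S" and "x \<in> S"
  shows "apply_on S M (e m) x = complex_of_real (lam m) * e m x"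
proof -
  have "apply_on S M (e m) x = (\<Sum>k\<in>S. \<Sum>y\<in>S. complex_of_real (lam k) * e k x * (cnj (e k y) * e m y))"
    using assms(2,4) unfolding apply_on_def spectral_decomp_on_def
    by (subst sum.swap) (simp add: sum_distrib_right mult.assoc)
  also have "\<dots> = (\<Sum>k\<in>S. op_id m k * (complex_of_real (lam k) * e k x))"
    using assms(2,3) unfolding spectral_decomp_on_def orthonormal_on_def inner_on_def
    by (intro sum.cong refl) (simp add: sum_distrib_left[symmetric] op_id_def)
  also have "\<dots> = complex_of_real (lam m) * e m x"
    using assms(1,3) by (simp add: sum_op_id_left)
  finally show ?thesis .
qed

lemma spectral_decomp_on_trace:
  assumes "spectral_decomp_on S M e lam"
  shows "(\<Sum>x\<in>S. M x x) = complex_of_real (\<Sum>k\<in>S. lam k)"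
proof -
  have "(\<Sum>x\<in>S. M x x) = (\<Sum>x\<in>S. \<Sum>k\<in>S. complex_of_real (lam k) * (cnj (e k x) * e k x))"
    using assms unfolding spectral_decomp_on_def by (intro sum.cong refl) (simp add: ac_simps)
  also have "\<dots> = (\<Sum>k\<in>S. complex_of_real (lam k) * inner_on S (e k) (e k))"
    unfolding inner_on_def by (subst sum.swap) (simp add: sum_distrib_left)
  finally show ?thesis
    using assms unfolding spectral_decomp_on_def orthonormal_on_def by simp
qed

section \<open>Configurations, states and partitions\<close>

lemma restr_configs: "restr x A \<in> configs A"
  unfolding restr_def configs_def by simp

lemma finite_configs: "finite A \<Longrightarrow> finite (configs A)"
proof -
  assume "finite A"
  have "configs A \<subseteq> (\<lambda>B i. i \<in> B) ` Pow A"
  proof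
    fix x assume "x \<in> configs A"
    then have "x = (\<lambda>i. i \<in> {j. x j})" and "{j. x j} \<in> Pow A"
      unfolding configs_def by auto
    then show "x \<in> (\<lambda>B i. i \<in> B) ` Pow A" by blast
  qed
  then show ?thesis using \<open>finite A\<close> by (simp add: finite_subset)
qed

lemma bij_betw_configs_union:
  assumes "A \<inter> B = {}"
  shows "bij_betw (\<lambda>(y, z) i. y i \<or> z i) (configs A \<times> configs B) (configs (A \<union> B))"
proof (rule bij_betw_byWitness[where f' = "\<lambda>x. (restr x A, restr x B)"])
  show "\<forall>a\<in>configs A \<times> configs B. (restr ((\<lambda>(y, z) i. y i \<or> z i) a) A, restr ((\<lambda>(y, z) i. y i \<or> z i) a) B) = a"
    using assms unfolding configs_def restr_def by (auto simp: fun_eq_iff)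
  show "\<forall>x\<in>configs (A \<union> B). (\<lambda>(y, z) i. y i \<or> z i) (restr x A, restr x B) = x"
    unfolding configs_def restr_def by (auto simp: fun_eq_iff)
  show "(\<lambda>(y, z) i. y i \<or> z i) ` (configs A \<times> configs B) \<subseteq> configs (A \<union> B)"
    unfolding configs_def by auto
  show "(\<lambda>x. (restr x A, restr x B)) ` configs (A \<union> B) \<subseteq> configs A \<times> configs B"
    using restr_configs by auto
qed

lemma sum_configs_Union_prod:
  fixes g :: "nat set \<Rightarrow> cfg \<Rightarrow> 'b::comm_semiring_1"
  assumes "finite L" and "\<forall>A\<in>L. finite A" and "\<forall>A\<in>L. \<forall>B\<in>L. A \<noteq> B \<longrightarrow> A \<inter> B = {}"
  shows "(\<Sum>x\<in>configs (\<Union>L). \<Prod>A\<in>L. g A (restr x A)) = (\<Prod>A\<in>L. \<Sum>y\<in>configs A. g A y)"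
  using assms
proof (induction L rule: finite_induct)
  case empty
  have "configs {} = {\<lambda>i. False}" unfolding configs_def by auto
  then show ?case by simp
next
  case (insert A L)
  define U where "U = \<Union>L"
  have disj: "B \<inter> A = {}" if "B \<in> L" for B
  proof -
    have "B \<noteq> A" using insert.hyps(2) that by blast
    then show ?thesis using insert.prems(2)[rule_format, of B A] that by simp
  qed
  then have "A \<inter> U = {}" unfolding U_def by blast
  have IH: "(\<Sum>x\<in>configs U. \<Prod>B\<in>L. g B (restr x B)) = (\<Prod>B\<in>L. \<Sum>y\<in>configs B. g B y)"
    unfolding U_def using insert.IH insert.prems by blast
  let ?join = "\<lambda>(y, z) i. y i \<or> z i"
  have restr_join: "restr (?join p) A = fst p" if "p \<in> configs A \<times> configs U" for p
    using that \<open>A \<inter> U = {}\<close> unfolding configs_def restr_def by (auto simp: fun_eq_iff)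
  have restr_join': "restr (?join p) B = restr (snd p) B" if "p \<in> configs A \<times> configs U" "B \<in> L" for p B
    using that disj[OF that(2)] unfolding configs_def restr_def by (auto simp: fun_eq_iff)
  have "(\<Sum>x\<in>configs (\<Union>(insert A L)). \<Prod>B\<in>insert A L. g B (restr x B))
      = (\<Sum>x\<in>configs (A \<union> U). g A (restr x A) * (\<Prod>B\<in>L. g B (restr x B)))"
    unfolding U_def using insert.hyps by simp
  also have "\<dots> = (\<Sum>p\<in>configs A \<times> configs U. g A (restr (?join p) A) * (\<Prod>B\<in>L. g B (restr (?join p) B)))"
    by (rule sum.reindex_bij_betw[OF bij_betw_configs_union[OF \<open>A \<inter> U = {}\<close>], symmetric])
  also have "\<dots> = (\<Sum>p\<in>configs A \<times> configs U. g A (fst p) * (\<Prod>B\<in>L. g B (restr (snd p) B)))"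
    using restr_join restr_join' by (intro sum.cong refl arg_cong2[where f = "(*)"] prod.cong) simp_all
  also have "\<dots> = (\<Sum>y\<in>configs A. g A y) * (\<Sum>z\<in>configs U. \<Prod>B\<in>L. g B (restr z B))"
    by (simp add: sum_product sum.cartesian_product split_beta)
  also have "\<dots> = (\<Prod>B\<in>insert A L. \<Sum>y\<in>configs B. g B y)"
    using IH insert.hyps by simp
  finally show ?case .
qed

lemma sum_configs_flip:
  assumes fin: "finite T" and i: "i \<in> T"
  shows "(\<Sum>x\<in>configs T. F x) = (\<Sum>x\<in>{x\<in>configs T. \<not> x i}. F x + F (x(i := True)))"
proof -
  define C0 where "C0 = {x\<in>configs T. \<not> x i}"
  define C1 where "C1 = {x\<in>configs T. x i}"
  have "finite (configs T)" using fin by (rule finite_configs)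
  then have fin01: "finite C0" "finite C1" unfolding C0_def C1_def by auto
  have "bij_betw (\<lambda>x. x(i := True)) C0 C1"
    by (rule bij_betw_byWitness[where f' = "\<lambda>x. x(i := False)"])
      (use i in \<open>auto simp: C0_def C1_def configs_def fun_eq_iff split: if_splits\<close>)
  then have "(\<Sum>x\<in>C1. F x) = (\<Sum>x\<in>C0. F (x(i := True)))"
    by (rule sum.reindex_bij_betw[symmetric])
  moreover have "configs T = C0 \<union> C1" and "C0 \<inter> C1 = {}"
    unfolding C0_def C1_def by auto
  ultimately show ?thesis
    using fin01 unfolding C0_def[symmetric] by (simp add: sum.union_disjoint sum.distrib)
qed

lemma state_hermitian:
  assumes "is_state A \<sigma>" and "finite A"
  shows "hermitian_on (configs A) \<sigma>"
  using assms finite_configs unfolding is_state_def Let_def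
  by (intro hermitian_on_if_quadratic_form_real) blast+

lemma state_spectral_decomp:
  assumes st: "is_state A \<sigma>" and "finite A"
  obtains e p where "spectral_decomp_on (configs A) \<sigma> e p"
    and "\<forall>k\<in>configs A. p k \<ge> 0" and "(\<Sum>k\<in>configs A. p k) = 1"
proof -
  have fin: "finite (configs A)" using assms(2) by (rule finite_configs)
  obtain e p where dec: "spectral_decomp_on (configs A) \<sigma> e p"
    using hermitian_spectral_decomp[OF fin state_hermitian[OF assms]] by blast
  show ?thesis
  proof
    show "\<forall>k\<in>configs A. p k \<ge> 0"
    proof
      fix k assume k: "k \<in> configs A"
      have "inner_on (configs A) (e k) (apply_on (configs A) \<sigma> (e k)) = complex_of_real (p k)"
        using dec k spectral_decomp_on_apply[OF fin dec k] unfolding inner_on_def spectral_decomp_on_def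
          orthonormal_on_def
        by (simp add: ac_simps sum_distrib_left[symmetric])
      moreover have "Re (inner_on (configs A) (e k) (apply_on (configs A) \<sigma> (e k))) \<ge> 0"
        using st unfolding is_state_def Let_def inner_on_def apply_on_def
        by (simp add: sum_distrib_left mult.assoc)
      ultimately show "p k \<ge> 0" by simp
    qed
    have "(\<Sum>x\<in>configs A. \<sigma> x x) = 1"
      using st unfolding is_state_def by blast
    then show "(\<Sum>k\<in>configs A. p k) = 1"
      unfolding spectral_decomp_on_trace[OF dec] of_real_eq_1_iff .
  qed (fact dec)
qed

lemma is_partitionD:
  assumes "is_partition N L"
  shows "finite L" and "\<forall>A\<in>L. finite A" and "\<forall>A\<in>L. \<forall>B\<in>L. A \<noteq> B \<longrightarrow> A \<inter> B = {}"
    and "\<Union>L = {1..N}" and "\<forall>A\<in>L. A \<noteq> {}"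
proof -
  show UL: "\<Union>L = {1..N}" using assms unfolding is_partition_def by blast
  then have "L \<subseteq> Pow {1..N}" by blast
  then show "finite L" by (rule finite_subset) simp
  show "\<forall>A\<in>L. finite A" using UL by (metis Union_upper finite_atLeastAtMost finite_subset)
  show "\<forall>A\<in>L. \<forall>B\<in>L. A \<noteq> B \<longrightarrow> A \<inter> B = {}" and "\<forall>A\<in>L. A \<noteq> {}"
    using assms unfolding is_partition_def by blast+
qed

lemma sum_card_squares_le:
  assumes L: "is_partition N L" and w: "max_block L \<le> w" and h: "card L \<ge> h"
  shows "(\<Sum>A\<in>L. (real (card A))\<^sup>2) \<le> real w * (real N - real h) + real N"
proof -
  note part = is_partitionD[OF L]
  have "card (\<Union>L) = (\<Sum>A\<in>L. card A)"
    using part(2,3) by (intro card_Union_disjoint) (auto simp: pairwise_def disjnt_def)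
  then have sum_card: "(\<Sum>A\<in>L. real (card A)) = real N"
    unfolding part(4) by (metis card_atLeastAtMost diff_Suc_1 of_nat_sum)
  have "(real (card A))\<^sup>2 \<le> real w * (real (card A) - 1) + real (card A)" if A: "A \<in> L" for A
  proof -
    have "card A \<le> Max (card ` L)" using part(1) A by simp
    then have "card A \<le> w" using w unfolding max_block_def by simp
    moreover have "card A \<ge> 1"
      using part(2,5) A by (simp add: Suc_le_eq card_gt_0_iff)
    ultimately have "real (card A) * (real (card A) - 1) \<le> real w * (real (card A) - 1)"
      by (intro mult_right_mono) auto
    then show ?thesis by (simp add: power2_eq_square algebra_simps)
  qed
  then have "(\<Sum>A\<in>L. (real (card A))\<^sup>2) \<le> (\<Sum>A\<in>L. real w * (real (card A) - 1) + real (card A))"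
    by (rule sum_mono)
  also have "\<dots> = real w * (real N - real (card L)) + real N"
    using sum_card by (simp add: sum.distrib sum_subtractf sum_distrib_left[symmetric])
  also have "\<dots> \<le> real w * (real N - real h) + real N"
    using h by (intro add_right_mono mult_left_mono) auto
  finally show ?thesis .
qed

section \<open>The collective spin on product states\<close>

definition spin_at :: "real^3 \<Rightarrow> nat \<Rightarrow> (cfg \<Rightarrow> complex) \<Rightarrow> cfg \<Rightarrow> complex" where
  "spin_at n i \<phi> x =
     (1/2) * (pauli_n n (x i) False * \<phi> (x(i := False)) + pauli_n n (x i) True * \<phi> (x(i := True)))"

lemma apply_J_op:
  assumes x: "x \<in> configs {1..N}"
  shows "apply_on (configs {1..N}) (J_op N n) \<phi> x = (\<Sum>i\<in>{1..N}. spin_at n i \<phi> x)"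
proof -
  define C where "C = configs {1..N}"
  have fin: "finite C" unfolding C_def by (simp add: finite_configs)
  define adj where "adj = (\<lambda>i y. \<forall>j. j \<noteq> i \<longrightarrow> x j = y j)"
  have "J_op N n x y * \<phi> y = (\<Sum>i\<in>{1..N}. (1/2) * (if adj i y then pauli_n n (x i) (y i) * \<phi> y else 0))"
    for y unfolding J_op_def adj_def sum_distrib_right sum_distrib_left by (intro sum.cong) auto
  then have "apply_on C (J_op N n) \<phi> x
      = (\<Sum>i\<in>{1..N}. (1/2) * (\<Sum>y\<in>C. if adj i y then pauli_n n (x i) (y i) * \<phi> y else 0))"
    unfolding apply_on_def by (simp only:) (subst sum.swap, simp add: sum_distrib_left)
  also have "\<dots> = (\<Sum>i\<in>{1..N}. spin_at n i \<phi> x)"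
  proof (rule sum.cong[OF refl])
    fix i assume i: "i \<in> {1..N}"
    have neighbours: "{y \<in> C. adj i y} = {x(i := False), x(i := True)}"
    proof
      show "{y \<in> C. adj i y} \<subseteq> {x(i := False), x(i := True)}"
      proof
        fix y assume "y \<in> {y \<in> C. adj i y}"
        then have "y = x(i := y i)" unfolding adj_def by (auto simp: fun_eq_iff)
        then show "y \<in> {x(i := False), x(i := True)}" by (cases "y i") auto
      qed
      show "{x(i := False), x(i := True)} \<subseteq> {y \<in> C. adj i y}"
        using x i unfolding C_def configs_def adj_def by auto
    qed
    have "x(i := False) \<noteq> x(i := True)" by (simp add: fun_eq_iff)
    then have "(\<Sum>y\<in>C. if adj i y then pauli_n n (x i) (y i) * \<phi> y else 0)
        = pauli_n n (x i) False * \<phi> (x(i := False)) + pauli_n n (x i) True * \<phi> (x(i := True))"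
      using fin by (simp add: sum.inter_filter[symmetric] neighbours)
    then show "(1/2) * (\<Sum>y\<in>C. if adj i y then pauli_n n (x i) (y i) * \<phi> y else 0) = spin_at n i \<phi> x"
      unfolding spin_at_def by simp
  qed
  finally show ?thesis unfolding C_def .
qed

lemma inner_on_apply_J_op:
  "inner_on (configs {1..N}) \<phi> (apply_on (configs {1..N}) (J_op N n) \<phi>)
   = (\<Sum>i\<in>{1..N}. inner_on (configs {1..N}) \<phi> (spin_at n i \<phi>))"
proof -
  have "inner_on (configs {1..N}) \<phi> (apply_on (configs {1..N}) (J_op N n) \<phi>)
      = (\<Sum>x\<in>configs {1..N}. \<Sum>i\<in>{1..N}. cnj (\<phi> x) * spin_at n i \<phi> x)"
    unfolding inner_on_def by (intro sum.cong refl) (simp only: apply_J_op sum_distrib_left)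
  also have "\<dots> = (\<Sum>i\<in>{1..N}. \<Sum>x\<in>configs {1..N}. cnj (\<phi> x) * spin_at n i \<phi> x)"
    by (rule sum.swap)
  finally show ?thesis by (simp only: inner_on_def)
qed

lemma hermitian_J_op: "hermitian_on S (J_op N n)"
proof -
  have pauli: "pauli_n n b a = cnj (pauli_n n a b)" for a b
    unfolding pauli_n_def by (cases a; cases b) (simp_all add: complex_eq_iff)
  have "cnj (if \<forall>j. j \<noteq> i \<longrightarrow> y j = x j then pauli_n n (y i) (x i) else 0)
      = (if \<forall>j. j \<noteq> i \<longrightarrow> x j = y j then pauli_n n (x i) (y i) else 0)" for x y :: cfg and i
  proof (cases "\<forall>j. j \<noteq> i \<longrightarrow> x j = y j")
    case True
    then have "\<forall>j. j \<noteq> i \<longrightarrow> y j = x j" by auto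
    then show ?thesis using True by (simp add: pauli[of "x i" "y i"])
  next
    case False
    then have "\<not> (\<forall>j. j \<noteq> i \<longrightarrow> y j = x j)" by auto
    then show ?thesis using False by (simp only: if_False complex_cnj_zero)
  qed
  then have "J_op N n x y = cnj (J_op N n y x)" for x y
    unfolding J_op_def by simp
  then show ?thesis unfolding hermitian_on_def by blast
qed

lemma norm_pauli_rows:
  fixes a b :: complex
  assumes "n1\<^sup>2 + n2\<^sup>2 + n3\<^sup>2 = 1"
  shows "(cmod (complex_of_real n3 * a + Complex n1 (- n2) * b))\<^sup>2
       + (cmod (Complex n1 n2 * a + complex_of_real (- n3) * b))\<^sup>2 = (cmod a)\<^sup>2 + (cmod b)\<^sup>2"
proof -
  have "(cmod (complex_of_real n3 * a + Complex n1 (- n2) * b))\<^sup>2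
      + (cmod (Complex n1 n2 * a + complex_of_real (- n3) * b))\<^sup>2
      = (n1\<^sup>2 + n2\<^sup>2 + n3\<^sup>2) * ((cmod a)\<^sup>2 + (cmod b)\<^sup>2)"
    by (simp only: cmod_power2, cases a, cases b, simp add: power2_eq_square algebra_simps)
  then show ?thesis using assms by simp
qed

lemma norm_spin_at:
  assumes fin: "finite T" and i: "i \<in> T" and n: "norm n = 1"
  shows "(\<Sum>x\<in>configs T. (cmod (spin_at n i \<phi> x))\<^sup>2) = (\<Sum>x\<in>configs T. (cmod (\<phi> x))\<^sup>2) / 4"
proof -
  have n2: "(n$1)\<^sup>2 + (n$2)\<^sup>2 + (n$3)\<^sup>2 = 1"
    using n unfolding norm_vec_def L2_set_def by (simp add: sum_3)
  have pair: "(cmod (spin_at n i \<phi> x))\<^sup>2 + (cmod (spin_at n i \<phi> (x(i := True))))\<^sup>2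
      = ((cmod (\<phi> x))\<^sup>2 + (cmod (\<phi> (x(i := True))))\<^sup>2) / 4" if "\<not> x i" for x
  proof -
    have "x(i := False) = x" and "x(i := True, i := False) = x"
      using that by (auto simp: fun_eq_iff)
    then have row1: "spin_at n i \<phi> x
        = (1/2) * (complex_of_real (n$3) * \<phi> x + Complex (n$1) (- n$2) * \<phi> (x(i := True)))"
      and row2: "spin_at n i \<phi> (x(i := True))
        = (1/2) * (Complex (n$1) (n$2) * \<phi> x + complex_of_real (- n$3) * \<phi> (x(i := True)))"
      using that unfolding spin_at_def pauli_n_def by simp_all
    have "(cmod (spin_at n i \<phi> x))\<^sup>2 + (cmod (spin_at n i \<phi> (x(i := True))))\<^sup>2
      = (1/4) * ((cmod (complex_of_real (n$3) * \<phi> x + Complex (n$1) (- n$2) * \<phi> (x(i := True))))\<^sup>2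
        + (cmod (Complex (n$1) (n$2) * \<phi> x + complex_of_real (- n$3) * \<phi> (x(i := True))))\<^sup>2)"
      unfolding row1 row2 by (simp add: norm_mult power_mult_distrib power_divide)
    then show ?thesis
      unfolding norm_pauli_rows[OF n2] by simp
  qed
  have "(\<Sum>x\<in>configs T. (cmod (spin_at n i \<phi> x))\<^sup>2)
      = (\<Sum>x\<in>{x\<in>configs T. \<not> x i}. ((cmod (\<phi> x))\<^sup>2 + (cmod (\<phi> (x(i := True))))\<^sup>2) / 4)"
    unfolding sum_configs_flip[OF fin i] by (intro sum.cong) (auto simp: pair)
  also have "\<dots> = (\<Sum>x\<in>configs T. (cmod (\<phi> x))\<^sup>2) / 4"
    unfolding sum_configs_flip[OF fin i] sum_divide_distrib ..
  finally show ?thesis .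
qed

definition prod_vec :: "nat set set \<Rightarrow> (nat set \<Rightarrow> cfg \<Rightarrow> complex) \<Rightarrow> cfg \<Rightarrow> complex" where
  "prod_vec L v x = (\<Prod>A\<in>L. v A (restr x A))"

lemma inner_prod_vec:
  assumes "finite L" and "\<forall>A\<in>L. finite A" and "\<forall>A\<in>L. \<forall>B\<in>L. A \<noteq> B \<longrightarrow> A \<inter> B = {}"
  shows "inner_on (configs (\<Union>L)) (prod_vec L f) (prod_vec L g) = (\<Prod>A\<in>L. inner_on (configs A) (f A) (g A))"
proof -
  have "inner_on (configs (\<Union>L)) (prod_vec L f) (prod_vec L g)
      = (\<Sum>x\<in>configs (\<Union>L). \<Prod>A\<in>L. cnj (f A (restr x A)) * g A (restr x A))"
    unfolding inner_on_def prod_vec_def by (simp add: prod.distrib)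
  also have "\<dots> = (\<Prod>A\<in>L. \<Sum>y\<in>configs A. cnj (f A y) * g A y)"
    by (rule sum_configs_Union_prod[OF assms])
  finally show ?thesis unfolding inner_on_def .
qed

lemma inner_prod_vec_update:
  assumes L: "finite L" "\<forall>A\<in>L. finite A" "\<forall>A\<in>L. \<forall>B\<in>L. A \<noteq> B \<longrightarrow> A \<inter> B = {}"
    and unit: "\<forall>C\<in>L. inner_on (configs C) (v C) (v C) = 1" and A: "A \<in> L"
  shows "inner_on (configs (\<Union>L)) (prod_vec L v) (prod_vec L (v(A := w))) = inner_on (configs A) (v A) w"
proof -
  have "(\<Prod>C\<in>L. inner_on (configs C) (v C) ((v(A := w)) C)) = (\<Prod>C\<in>{A}. inner_on (configs C) (v C) ((v(A := w)) C))"
    using L(1) A unit by (intro prod.mono_neutral_right) auto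
  then show ?thesis unfolding inner_prod_vec[OF L] by simp
qed

lemma inner_prod_vec_update_pair:
  assumes L: "finite L" "\<forall>A\<in>L. finite A" "\<forall>A\<in>L. \<forall>B\<in>L. A \<noteq> B \<longrightarrow> A \<inter> B = {}"
    and unit: "\<forall>C\<in>L. inner_on (configs C) (v C) (v C) = 1"
    and A: "A \<in> L" and B: "B \<in> L" and AB: "A \<noteq> B"
  shows "inner_on (configs (\<Union>L)) (prod_vec L (v(A := w))) (prod_vec L (v(B := w')))
       = inner_on (configs A) w (v A) * inner_on (configs B) (v B) w'"
proof -
  have "(\<Prod>C\<in>L. inner_on (configs C) ((v(A := w)) C) ((v(B := w')) C))
      = (\<Prod>C\<in>{A, B}. inner_on (configs C) ((v(A := w)) C) ((v(B := w')) C))"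
    using L(1) A B unit by (intro prod.mono_neutral_right) auto
  then show ?thesis unfolding inner_prod_vec[OF L] using AB by simp
qed

lemma spin_at_prod_vec:
  assumes "finite L" and A: "A \<in> L" and i: "i \<in> A"
    and disj: "\<forall>A\<in>L. \<forall>B\<in>L. A \<noteq> B \<longrightarrow> A \<inter> B = {}"
  shows "spin_at n i (prod_vec L v) = prod_vec L (v(A := spin_at n i (v A)))"
proof
  fix x
  have other: "restr (x(i := b)) B = restr x B" if "B \<in> L - {A}" for B b
  proof -
    have "i \<notin> B" using disj A i that by blast
    then show ?thesis unfolding restr_def by (auto simp: fun_eq_iff)
  qed
  have own: "restr (x(i := b)) A = (restr x A)(i := b)" for b
    using i unfolding restr_def by (auto simp: fun_eq_iff)
  have own_i: "restr x A i = x i"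
    using i unfolding restr_def by simp
  have split: "prod_vec L u y = u A (restr y A) * (\<Prod>B\<in>L - {A}. u B (restr y B))" for u y
    unfolding prod_vec_def using assms(1) A by (rule prod.remove)
  have "(\<Prod>B\<in>L - {A}. v B (restr (x(i := b)) B)) = (\<Prod>B\<in>L - {A}. v B (restr x B))" for b
    using other by (intro prod.cong) auto
  moreover have "(\<Prod>B\<in>L - {A}. (v(A := spin_at n i (v A))) B (restr x B)) = (\<Prod>B\<in>L - {A}. v B (restr x B))"
    by (intro prod.cong) auto
  ultimately show "spin_at n i (prod_vec L v) x = prod_vec L (v(A := spin_at n i (v A))) x"
    unfolding split spin_at_def own by (simp add: algebra_simps own_i)
qed

lemma inner_spin_at_prod_vec_distinct_blocks:
  assumes L: "is_partition N L" and unit: "\<forall>C\<in>L. inner_on (configs C) (v C) (v C) = 1"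
    and A: "A \<in> L" and B: "B \<in> L" and AB: "A \<noteq> B" and i: "i \<in> A" and j: "j \<in> B"
  defines "S \<equiv> configs {1..N}" and "\<psi> \<equiv> prod_vec L v"
  shows "inner_on S (spin_at n i \<psi>) (spin_at n j \<psi>)
       = cnj (inner_on S \<psi> (spin_at n i \<psi>)) * inner_on S \<psi> (spin_at n j \<psi>)"
proof -
  note part = is_partitionD[OF L]
  have S: "S = configs (\<Union>L)" unfolding S_def part(4) ..
  note update = inner_prod_vec_update[OF part(1-3) unit, folded S \<psi>_def]
  have spin_local: "spin_at n k \<psi> = prod_vec L (v(C := spin_at n k (v C)))" if "C \<in> L" "k \<in> C" for C k
    unfolding \<psi>_def using spin_at_prod_vec[OF part(1) that part(3)] .
  show ?thesis
    unfolding spin_local[OF A i] spin_local[OF B j] update[OF A] update[OF B]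
      inner_prod_vec_update_pair[OF part(1-3) unit A B AB, folded S]
    by (simp add: inner_on_commute[of "configs A" "spin_at n i (v A)"])
qed

text \<open>\<open>J\<psi> - c\<psi>\<close> is the sum over qubits \<open>i\<close> of \<open>u i = S\<^sub>i\<psi> - \<langle>\<psi>, S\<^sub>i\<psi>\<rangle>\<psi>\<close>, where
  \<open>S\<^sub>i = spin_at n i\<close>; for a product vector the \<open>u i\<close> of different blocks are orthogonal
  and each has squared norm at most \<open>1/4\<close>.\<close>

lemma variance_J_prod_vec:
  assumes n: "norm n = 1" and L: "is_partition N L"
    and unit: "\<forall>A\<in>L. inner_on (configs A) (v A) (v A) = 1"
  defines "S \<equiv> configs {1..N}" and "\<psi> \<equiv> prod_vec L v"
  obtains c :: real
  where "(\<Sum>x\<in>S. (cmod (apply_on S (J_op N n) \<psi> x - complex_of_real c * \<psi> x))\<^sup>2)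
           \<le> (\<Sum>A\<in>L. (real (card A))\<^sup>2) / 4"
proof -
  note part = is_partitionD[OF L]
  define a where "a i = inner_on S \<psi> (spin_at n i \<psi>)" for i
  have \<psi>_unit: "inner_on S \<psi> \<psi> = 1"
    unfolding S_def \<psi>_def part(4)[symmetric] inner_prod_vec[OF part(1-3)] using unit by simp
  then have \<psi>_norm: "(\<Sum>x\<in>S. (cmod (\<psi> x))\<^sup>2) = 1"
    unfolding inner_on_self of_real_eq_1_iff .
  define u where "u i x = spin_at n i \<psi> x - a i * \<psi> x" for i x
  have inner_u: "inner_on S (u i) (u j) = inner_on S (spin_at n i \<psi>) (spin_at n j \<psi>) - cnj (a i) * a j" for i j
    unfolding u_def inner_on_diff_scaled \<psi>_unit a_def
    by (simp add: inner_on_commute[of S "spin_at n i \<psi>" \<psi>])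
  have "Re (inner_on S (\<lambda>x. \<Sum>i\<in>(\<Union>L). u i x) (\<lambda>x. \<Sum>i\<in>(\<Union>L). u i x))
      \<le> 1/4 * (\<Sum>A\<in>L. (real (card A))\<^sup>2)"
  proof (rule re_inner_on_sum_blockwise_le[OF part(1-3)])
    show "inner_on S (u i) (u j) = 0" if "A \<in> L" "B \<in> L" "A \<noteq> B" "i \<in> A" "j \<in> B" for A B i j
    proof -
      have "inner_on S (spin_at n i \<psi>) (spin_at n j \<psi>) = cnj (a i) * a j"
        unfolding a_def S_def \<psi>_def by (rule inner_spin_at_prod_vec_distinct_blocks[OF L unit that])
      then show ?thesis unfolding inner_u by simp
    qed
    show "Re (inner_on S (u i) (u i)) \<le> 1/4" if "i \<in> \<Union>L" for i
    proof -
      have spin_norm: "inner_on S (spin_at n i \<psi>) (spin_at n i \<psi>) = 1/4"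
        using \<psi>_norm that unfolding part(4) inner_on_self S_def
        by (simp add: norm_spin_at[OF finite_atLeastAtMost _ n])
      show ?thesis unfolding inner_u spin_norm by (simp add: cnj_mult_self)
    qed
  qed
  moreover obtain c :: real where c: "complex_of_real c = (\<Sum>i\<in>{1..N}. a i)"
  proof
    show "complex_of_real (Re (\<Sum>i\<in>{1..N}. a i)) = (\<Sum>i\<in>{1..N}. a i)"
      using hermitian_on_inner_apply_real[OF hermitian_J_op[of "configs {1..N}" N n], of \<psi>]
      unfolding a_def S_def inner_on_apply_J_op by (simp add: complex_eq_iff)
  qed
  moreover have "apply_on S (J_op N n) \<psi> x - complex_of_real c * \<psi> x = (\<Sum>i\<in>(\<Union>L). u i x)" if "x \<in> S" for x
    using that unfolding S_def apply_J_op[OF that[unfolded S_def]] c u_def part(4)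
    by (simp add: sum_subtractf sum_distrib_right)
  ultimately have "(\<Sum>x\<in>S. (cmod (apply_on S (J_op N n) \<psi> x - complex_of_real c * \<psi> x))\<^sup>2)
      \<le> (\<Sum>A\<in>L. (real (card A))\<^sup>2) / 4"
    unfolding inner_on_self by (simp cong: sum.cong)
  then show ?thesis by (rule that)
qed

lemma prod_op_pure_mixture:
  assumes L: "is_partition N L" and states: "\<forall>A\<in>L. is_state A (r A)"
  obtains T :: "(nat set \<Rightarrow> cfg) set" and W :: "(nat set \<Rightarrow> cfg) \<Rightarrow> real"
    and v :: "(nat set \<Rightarrow> cfg) \<Rightarrow> nat set \<Rightarrow> cfg \<Rightarrow> complex"
  where "finite T" and "\<forall>t\<in>T. W t \<ge> 0" and "(\<Sum>t\<in>T. W t) = 1"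
    and "\<forall>t\<in>T. \<forall>A\<in>L. inner_on (configs A) (v t A) (v t A) = 1"
    and "\<forall>x y. prod_op L r x y = (\<Sum>t\<in>T. complex_of_real (W t) * (prod_vec L (v t) x * cnj (prod_vec L (v t) y)))"
proof -
  note part = is_partitionD[OF L]
  have fin_configs: "finite (configs A)" if "A \<in> L" for A
    using part(2) that by (simp add: finite_configs)
  have "\<forall>A\<in>L. \<exists>e p. spectral_decomp_on (configs A) (r A) e p
      \<and> (\<forall>k\<in>configs A. p k \<ge> 0) \<and> (\<Sum>k\<in>configs A. p k) = 1"
    using states part(2) by (metis state_spectral_decomp)
  then obtain E P where EP: "\<And>A. A \<in> L \<Longrightarrow> spectral_decomp_on (configs A) (r A) (E A) (P A)
      \<and> (\<forall>k\<in>configs A. P A k \<ge> 0) \<and> (\<Sum>k\<in>configs A. P A k) = 1"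
    by (metis bchoice)
  define T where "T = PiE L configs"
  define W where "W t = (\<Prod>A\<in>L. P A (t A))" for t
  define v where "v t A = E A (t A)" for t A
  show ?thesis
  proof
    show "finite T" unfolding T_def using part(1) fin_configs by (rule finite_PiE)
    show "\<forall>t\<in>T. W t \<ge> 0"
      unfolding W_def T_def using EP by (auto intro!: prod_nonneg)
    have "(\<Sum>t\<in>T. W t) = (\<Prod>A\<in>L. \<Sum>k\<in>configs A. P A k)"
      unfolding T_def W_def using part(1) fin_configs by (rule prod_sum_PiE[symmetric])
    then show "(\<Sum>t\<in>T. W t) = 1" using EP by simp
    show "\<forall>t\<in>T. \<forall>A\<in>L. inner_on (configs A) (v t A) (v t A) = 1"
      using EP unfolding T_def v_def spectral_decomp_on_def orthonormal_on_def by (auto dest: PiE_mem)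
    show "\<forall>x y. prod_op L r x y = (\<Sum>t\<in>T. complex_of_real (W t) * (prod_vec L (v t) x * cnj (prod_vec L (v t) y)))"
    proof (intro allI)
    fix x y
    have "prod_op L r x y = (\<Prod>A\<in>L. \<Sum>k\<in>configs A.
        complex_of_real (P A k) * E A k (restr x A) * cnj (E A k (restr y A)))"
      unfolding prod_op_def using EP restr_configs unfolding spectral_decomp_on_def
      by (intro prod.cong refl) blast
    also have "\<dots> = (\<Sum>t\<in>T. \<Prod>A\<in>L.
        complex_of_real (P A (t A)) * E A (t A) (restr x A) * cnj (E A (t A) (restr y A)))"
      unfolding T_def using part(1) fin_configs by (rule prod_sum_PiE)
    also have "\<dots> = (\<Sum>t\<in>T. complex_of_real (W t) * (prod_vec L (v t) x * cnj (prod_vec L (v t) y)))"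
      unfolding W_def v_def prod_vec_def by (simp add: prod.distrib mult.assoc)
    finally show "prod_op L r x y = (\<Sum>t\<in>T. complex_of_real (W t) * (prod_vec L (v t) x * cnj (prod_vec L (v t) y)))" .
    qed
  qed
qed

section \<open>A variational bound for the quantum Fisher information\<close>

text \<open>For Hermitian \<open>X\<close>
  the QFI of \<open>\<sigma>\<close> is one of its values (\<open>qfi_functional_at_optimum\<close>), and since it is
  affine in \<open>\<sigma>\<close>, upper bounds on it pass to mixtures.\<close>

definition qfi_functional ::
    "'a set \<Rightarrow> ('a \<Rightarrow> 'a \<Rightarrow> complex) \<Rightarrow> ('a \<Rightarrow> 'a \<Rightarrow> complex) \<Rightarrow> ('a \<Rightarrow> 'a \<Rightarrow> complex) \<Rightarrow> real" where
  "qfi_functional S A X \<sigma> =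
     Re (\<Sum>y\<in>S. \<Sum>z\<in>S. \<sigma> z y * (4 * \<i> * op_mult S (op_adj X) A y z - op_mult S (op_adj X) X y z))"

lemma qfi_functional_pure:
  "qfi_functional S A X (\<lambda>x y. \<psi> x * cnj (\<psi> y)) =
   Re (4 * \<i> * inner_on S (apply_on S X \<psi>) (apply_on S A \<psi>) - inner_on S (apply_on S X \<psi>) (apply_on S X \<psi>))"
proof -
  have bilinear: "(\<Sum>y\<in>S. \<Sum>z\<in>S. \<psi> z * cnj (\<psi> y) * op_mult S (op_adj K) M y z)
      = inner_on S (apply_on S K \<psi>) (apply_on S M \<psi>)" for K M
  proof -
    have "inner_on S (apply_on S K \<psi>) (apply_on S M \<psi>)
        = (\<Sum>x\<in>S. \<Sum>y\<in>S. \<Sum>z\<in>S. \<psi> z * cnj (\<psi> y) * (cnj (K x y) * M x z))"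
      unfolding inner_on_def apply_on_def cnj_sum sum_product by (simp add: ac_simps)
    also have "\<dots> = (\<Sum>y\<in>S. \<Sum>z\<in>S. \<psi> z * cnj (\<psi> y) * op_mult S (op_adj K) M y z)"
      unfolding op_mult_def op_adj_def by (subst sum_swap3) (simp add: sum_distrib_left)
    finally show ?thesis by simp
  qed
  show ?thesis
    unfolding qfi_functional_def bilinear[symmetric]
    by (simp add: right_diff_distrib sum_subtractf sum_distrib_left ac_simps)
qed

lemma qfi_functional_convex:
  assumes "finite I" and "\<forall>x\<in>S. \<forall>y\<in>S. \<sigma> x y = (\<Sum>i\<in>I. complex_of_real (p i) * \<tau> i x y)"
  shows "qfi_functional S A X \<sigma> = (\<Sum>i\<in>I. p i * qfi_functional S A X (\<tau> i))"
proof -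
  define G where "G = (\<lambda>y z. 4 * \<i> * op_mult S (op_adj X) A y z - op_mult S (op_adj X) X y z)"
  have "(\<Sum>y\<in>S. \<Sum>z\<in>S. \<sigma> z y * G y z) = (\<Sum>y\<in>S. \<Sum>z\<in>S. \<Sum>i\<in>I. complex_of_real (p i) * (\<tau> i z y * G y z))"
    using assms(2) by (simp add: sum_distrib_right mult.assoc)
  also have "\<dots> = (\<Sum>i\<in>I. complex_of_real (p i) * (\<Sum>y\<in>S. \<Sum>z\<in>S. \<tau> i z y * G y z))"
    by (subst sum_swap3[symmetric]) (simp add: sum_distrib_left)
  moreover have Q: "qfi_functional S A X \<sigma>' = Re (\<Sum>y\<in>S. \<Sum>z\<in>S. \<sigma>' z y * G y z)" for \<sigma>'
    unfolding qfi_functional_def G_def ..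
  ultimately show ?thesis
    unfolding Q by (simp add: Re_sum)
qed

lemma qfi_functional_pure_le:
  assumes X: "hermitian_on S X"
  shows "qfi_functional S A X (\<lambda>x y. \<psi> x * cnj (\<psi> y))
     \<le> 4 * (\<Sum>x\<in>S. (cmod (apply_on S A \<psi> x - complex_of_real c * \<psi> x))\<^sup>2)"
proof -
  define u where "u = apply_on S X \<psi>"
  define w where "w = (\<lambda>x. apply_on S A \<psi> x - complex_of_real c * \<psi> x)"
  have pointwise: "Re (4 * \<i> * (cnj a * b)) \<le> (cmod a)\<^sup>2 + 4 * (cmod b)\<^sup>2" for a b :: complex
  proof -
    have "0 \<le> (Re a + 2 * Im b)\<^sup>2 + (Im a - 2 * Re b)\<^sup>2" by simp
    then show ?thesis unfolding cmod_power2 by (simp add: power2_eq_square algebra_simps)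
  qed
  have "inner_on S u (apply_on S A \<psi>) = inner_on S u w + complex_of_real c * inner_on S u \<psi>"
    unfolding inner_on_def w_def by (simp add: sum_distrib_left algebra_simps sum.distrib[symmetric])
  moreover have "Im (inner_on S u \<psi>) = 0"
    using hermitian_on_inner_apply_real[OF X, of \<psi>] unfolding u_def
    by (subst inner_on_commute) simp
  ultimately have "Re (4 * \<i> * inner_on S u (apply_on S A \<psi>)) = Re (4 * \<i> * inner_on S u w)"
    by (simp add: algebra_simps)
  also have "\<dots> = (\<Sum>x\<in>S. Re (4 * \<i> * (cnj (u x) * w x)))"
    unfolding inner_on_def by (simp add: sum_distrib_left Re_sum)
  also have "\<dots> \<le> (\<Sum>x\<in>S. (cmod (u x))\<^sup>2 + 4 * (cmod (w x))\<^sup>2)"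
    by (intro sum_mono pointwise)
  finally have "Re (4 * \<i> * inner_on S u (apply_on S A \<psi>)) - (\<Sum>x\<in>S. (cmod (u x))\<^sup>2)
      \<le> 4 * (\<Sum>x\<in>S. (cmod (w x))\<^sup>2)"
    by (simp add: sum.distrib sum_distrib_left)
  then show ?thesis
    unfolding qfi_functional_pure u_def[symmetric] inner_on_self w_def by simp
qed

lemma qfi_term_at_optimum:
  fixes r :: real and a :: complex
  shows "Re (4 * \<i> * cnj (- 2 * \<i> * complex_of_real r * a) * a) - (cmod (- 2 * \<i> * complex_of_real r * a))\<^sup>2
       = (-8 * r - 4 * r\<^sup>2) * (cmod a)\<^sup>2"
proof -
  have "cnj (- 2 * \<i> * complex_of_real r * a) * a = 2 * \<i> * complex_of_real r * (cnj a * a)"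
    by (simp add: algebra_simps)
  then have "Re (4 * \<i> * cnj (- 2 * \<i> * complex_of_real r * a) * a) = -8 * r * (cmod a)\<^sup>2"
    by (simp add: mult.assoc cnj_mult_self)
  moreover have "(cmod (- 2 * \<i> * complex_of_real r * a))\<^sup>2 = 4 * r\<^sup>2 * (cmod a)\<^sup>2"
    by (simp add: norm_mult power_mult_distrib)
  ultimately show ?thesis by (simp add: algebra_simps)
qed

lemma qfi_pair_identity:
  fixes lk lm c :: real
  defines "r \<equiv> \<lambda>a b :: real. if a + b > 0 then (a - b) / (a + b) else 0"
  shows "lm * ((-8 * r lk lm - 4 * (r lk lm)\<^sup>2) * c) + lk * ((-8 * r lm lk - 4 * (r lm lk)\<^sup>2) * c)
       = 4 * (if lk + lm > 0 then (lk - lm)\<^sup>2 / (lk + lm) * c else 0)"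
proof (cases "lk + lm > 0")
  case True
  define q where "q = (lk - lm) / (lk + lm)"
  have r: "r lk lm = q" "r lm lk = - q"
    unfolding r_def q_def using True by (simp_all add: add.commute minus_divide_left)
  have q: "q * (lk + lm) = lk - lm" unfolding q_def using True by simp
  have "lm * ((-8 * r lk lm - 4 * (r lk lm)\<^sup>2) * c) + lk * ((-8 * r lm lk - 4 * (r lm lk)\<^sup>2) * c)
      = (8 * q * (lk - lm) - 4 * q * (q * (lk + lm))) * c"
    unfolding r by (simp add: power2_eq_square algebra_simps)
  also have "\<dots> = 4 * (q * (lk - lm)) * c" unfolding q by simp
  also have "\<dots> = 4 * ((lk - lm)\<^sup>2 / (lk + lm) * c)" unfolding q_def by (simp add: power2_eq_square)
  finally show ?thesis using True by simp
next
  case False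
  then show ?thesis unfolding r_def by (simp add: add.commute)
qed

lemma qfi_functional_basis_vector:
  fixes C :: "'a \<Rightarrow> 'a \<Rightarrow> complex"
  assumes fin: "finite S" and orth: "orthonormal_on S e" and m: "m \<in> S"
  defines "X \<equiv> \<lambda>x y. \<Sum>k\<in>S. \<Sum>l\<in>S. C k l * e k x * cnj (e l y)"
  shows "qfi_functional S A X (\<lambda>x y. e m x * cnj (e m y))
       = (\<Sum>k\<in>S. Re (4 * \<i> * cnj (C k m) * inner_on S (e k) (apply_on S A (e m))) - (cmod (C k m))\<^sup>2)"
proof -
  have X_e: "apply_on S X (e m) = (\<lambda>x. \<Sum>k\<in>S. C k m * e k x)"
    unfolding X_def using apply_on_basis_expansion[OF fin orth m] by blast
  have XA: "inner_on S (apply_on S X (e m)) (apply_on S A (e m))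
      = (\<Sum>k\<in>S. cnj (C k m) * inner_on S (e k) (apply_on S A (e m)))"
    unfolding X_e inner_on_lincomb_left ..
  have XX: "inner_on S (apply_on S X (e m)) (apply_on S X (e m)) = (\<Sum>k\<in>S. cnj (C k m) * C k m)"
    unfolding X_e by (rule inner_on_lincomb[OF fin orth])
  have "4 * \<i> * inner_on S (apply_on S X (e m)) (apply_on S A (e m)) - inner_on S (apply_on S X (e m)) (apply_on S X (e m))
      = (\<Sum>k\<in>S. 4 * \<i> * cnj (C k m) * inner_on S (e k) (apply_on S A (e m))
      - complex_of_real ((cmod (C k m))\<^sup>2))"
    unfolding XA XX by (simp add: sum_distrib_left sum_subtractf cnj_mult_self mult.assoc)
  then show ?thesis
    unfolding qfi_functional_pure by (simp only: Re_sum minus_complex.sel Re_complex_of_real)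
qed

lemma qfi_functional_at_optimum:
  fixes \<rho> A :: "'a \<Rightarrow> 'a \<Rightarrow> complex" and lam :: "'a \<Rightarrow> real"
  assumes fin: "finite S" and dec: "spectral_decomp_on S \<rho> e lam" and A: "hermitian_on S A"
  defines "a \<equiv> \<lambda>k l. inner_on S (e k) (apply_on S A (e l))"
    and "r \<equiv> \<lambda>k l. if lam k + lam l > 0 then (lam k - lam l) / (lam k + lam l) else 0"
  defines "C \<equiv> \<lambda>k l. - 2 * \<i> * complex_of_real (r k l) * a k l"
  defines "X \<equiv> \<lambda>x y. \<Sum>k\<in>S. \<Sum>l\<in>S. C k l * e k x * cnj (e l y)"
  shows "hermitian_on S X"
    and "qfi_functional S A X \<rho> = 2 * (\<Sum>k\<in>S. \<Sum>l\<in>S.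
           if lam k + lam l > 0 then (lam k - lam l)\<^sup>2 / (lam k + lam l) * (cmod (a k l))\<^sup>2 else 0)"
proof -
  have orth: "orthonormal_on S e" using dec unfolding spectral_decomp_on_def by blast
  have a_swap: "a l k = cnj (a k l)" for k l
    unfolding a_def by (rule hermitian_matrix_element_swap[OF A])
  have r_swap: "r l k = - r k l" for k l
    unfolding r_def by (simp add: add.commute minus_divide_left)
  have "C l k = cnj (C k l)" for k l
    unfolding C_def a_swap[of k l] r_swap[of k l] by simp
  then show "hermitian_on S X"
    unfolding X_def by (intro hermitian_on_basis_expansion) blast
  define F where "F k m = lam m * ((-8 * r k m - 4 * (r k m)\<^sup>2) * (cmod (a k m))\<^sup>2)" for k m
  have "qfi_functional S A X \<rho> = (\<Sum>m\<in>S. lam m * qfi_functional S A X (\<lambda>x y. e m x * cnj (e m y)))"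
    using dec unfolding spectral_decomp_on_def by (intro qfi_functional_convex[OF fin]) (simp add: mult.assoc)
  also have "\<dots> = (\<Sum>m\<in>S. \<Sum>k\<in>S. F k m)"
  proof (intro sum.cong refl)
    fix m assume m: "m \<in> S"
    have "qfi_functional S A X (\<lambda>x y. e m x * cnj (e m y))
        = (\<Sum>k\<in>S. Re (4 * \<i> * cnj (C k m) * a k m) - (cmod (C k m))\<^sup>2)"
      unfolding X_def a_def by (rule qfi_functional_basis_vector[OF fin orth m])
    also have "\<dots> = (\<Sum>k\<in>S. (-8 * r k m - 4 * (r k m)\<^sup>2) * (cmod (a k m))\<^sup>2)"
      unfolding C_def qfi_term_at_optimum ..
    finally show "lam m * qfi_functional S A X (\<lambda>x y. e m x * cnj (e m y)) = (\<Sum>k\<in>S. F k m)"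
      unfolding F_def by (simp add: sum_distrib_left)
  qed
  finally have Q: "qfi_functional S A X \<rho> = (\<Sum>m\<in>S. \<Sum>k\<in>S. F k m)" .
  have "(\<Sum>m\<in>S. \<Sum>k\<in>S. F k m) = (\<Sum>k\<in>S. \<Sum>m\<in>S. F k m)"
    by (rule sum.swap)
  then have "2 * qfi_functional S A X \<rho> = (\<Sum>k\<in>S. \<Sum>m\<in>S. F k m + F m k)"
    unfolding Q by (simp add: sum.distrib)
  also have "\<dots> = (\<Sum>k\<in>S. \<Sum>m\<in>S. 4 * (if lam k + lam m > 0
      then (lam k - lam m)\<^sup>2 / (lam k + lam m) * (cmod (a k m))\<^sup>2 else 0))"
  proof (intro sum.cong refl)
    fix k m
    have "cmod (a m k) = cmod (a k m)" unfolding a_swap[of k m] by simp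
    then show "F k m + F m k = 4 * (if lam k + lam m > 0
        then (lam k - lam m)\<^sup>2 / (lam k + lam m) * (cmod (a k m))\<^sup>2 else 0)"
      unfolding F_def r_def using qfi_pair_identity[where lk = "lam k" and lm = "lam m" and c = "(cmod (a k m))\<^sup>2"] by simp
  qed
  finally show "qfi_functional S A X \<rho> = 2 * (\<Sum>k\<in>S. \<Sum>l\<in>S.
           if lam k + lam l > 0 then (lam k - lam l)\<^sup>2 / (lam k + lam l) * (cmod (a k l))\<^sup>2 else 0)"
    by (simp add: sum_distrib_left[symmetric])
qed

lemma is_eigdec_iff: "is_eigdec N \<rho> e lam \<longleftrightarrow> spectral_decomp_on (configs {1..N}) \<rho> e lam"
  unfolding is_eigdec_def spectral_decomp_on_def orthonormal_on_def inner_on_def op_id_def ..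

lemma melem_eq_inner_on: "melem N u A v = inner_on (configs {1..N}) u (apply_on (configs {1..N}) A v)"
  unfolding melem_def inner_on_def apply_on_def by (simp add: sum_distrib_left mult.assoc)

lemma QFI_le:
  assumes \<rho>: "hermitian_on (configs {1..N}) \<rho>" and A: "hermitian_on (configs {1..N}) A"
    and bound: "\<And>X. hermitian_on (configs {1..N}) X \<Longrightarrow> qfi_functional (configs {1..N}) A X \<rho> \<le> B"
  shows "QFI N \<rho> A \<le> B"
proof -
  define S where "S = configs {1..N}"
  have fin: "finite S" unfolding S_def by (simp add: finite_configs)
  define d where "d = (SOME d. is_eigdec N \<rho> (fst d) (snd d))"
  have "\<exists>d. is_eigdec N \<rho> (fst d) (snd d)"
    using hermitian_spectral_decomp[OF fin \<rho>[folded S_def]] unfolding is_eigdec_iff S_def by auto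
  then have dec: "spectral_decomp_on S \<rho> (fst d) (snd d)"
    unfolding d_def S_def is_eigdec_iff[symmetric] by (rule someI_ex)
  obtain X where "hermitian_on S X" and "qfi_functional S A X \<rho> = QFI N \<rho> A"
    using qfi_functional_at_optimum[OF fin dec A[folded S_def]]
    unfolding QFI_def Let_def d_def[symmetric] melem_eq_inner_on S_def by blast
  then show ?thesis using bound unfolding S_def by metis
qed

section \<open>Separable states\<close>

definition qfi_bounded_on :: "'a set \<Rightarrow> ('a \<Rightarrow> 'a \<Rightarrow> complex) \<Rightarrow> real \<Rightarrow> ('a \<Rightarrow> 'a \<Rightarrow> complex) \<Rightarrow> bool" where
  "qfi_bounded_on S A B \<sigma> \<longleftrightarrow>
     hermitian_on S \<sigma> \<and> (\<forall>X. hermitian_on S X \<longrightarrow> qfi_functional S A X \<sigma> \<le> B)"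

lemma qfi_bounded_on_convex:
  assumes "finite I" and "\<forall>i\<in>I. p i \<ge> 0" and "(\<Sum>i\<in>I. p i) = 1"
    and bounded: "\<forall>i\<in>I. qfi_bounded_on S A B (\<tau> i)"
    and \<sigma>: "\<forall>x\<in>S. \<forall>y\<in>S. \<sigma> x y = (\<Sum>i\<in>I. complex_of_real (p i) * \<tau> i x y)"
  shows "qfi_bounded_on S A B \<sigma>"
  unfolding qfi_bounded_on_def
proof (intro conjI allI impI)
  have "\<sigma> x y = cnj (\<sigma> y x)" if "x \<in> S" "y \<in> S" for x y
  proof -
    have "\<tau> i x y = cnj (\<tau> i y x)" if "i \<in> I" for i
      using bounded \<open>x \<in> S\<close> \<open>y \<in> S\<close> that unfolding qfi_bounded_on_def hermitian_on_def by blast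
    then show ?thesis using \<sigma> that by (simp cong: sum.cong)
  qed
  then show "hermitian_on S \<sigma>" unfolding hermitian_on_def by blast
  fix X assume "hermitian_on S X"
  then have "qfi_functional S A X \<sigma> \<le> (\<Sum>i\<in>I. p i * B)"
    unfolding qfi_functional_convex[OF assms(1) \<sigma>] using assms(2) bounded
    unfolding qfi_bounded_on_def by (intro sum_mono mult_left_mono) auto
  also have "\<dots> = B" using assms(3) by (simp add: sum_distrib_right[symmetric])
  finally show "qfi_functional S A X \<sigma> \<le> B" .
qed

lemma qfi_bounded_on_prod_vec:
  assumes n: "norm n = 1" and L: "is_partition N L"
    and unit: "\<forall>A\<in>L. inner_on (configs A) (v A) (v A) = 1"
    and B: "(\<Sum>A\<in>L. (real (card A))\<^sup>2) \<le> B"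
  shows "qfi_bounded_on (configs {1..N}) (J_op N n) B (\<lambda>x y. prod_vec L v x * cnj (prod_vec L v y))"
  unfolding qfi_bounded_on_def
proof (intro conjI allI impI)
  show "hermitian_on (configs {1..N}) (\<lambda>x y. prod_vec L v x * cnj (prod_vec L v y))"
    unfolding hermitian_on_def by simp
  fix X assume X: "hermitian_on (configs {1..N}) X"
  obtain c where c: "(\<Sum>x\<in>configs {1..N}. (cmod (apply_on (configs {1..N}) (J_op N n) (prod_vec L v) x
      - complex_of_real c * prod_vec L v x))\<^sup>2) \<le> (\<Sum>A\<in>L. (real (card A))\<^sup>2) / 4"
    using variance_J_prod_vec[OF n L unit] .
  show "qfi_functional (configs {1..N}) (J_op N n) X (\<lambda>x y. prod_vec L v x * cnj (prod_vec L v y)) \<le> B"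
    using qfi_functional_pure_le[OF X, of "J_op N n" "prod_vec L v" c] c B by linarith
qed

lemma qfi_bounded_on_prod_op:
  assumes n: "norm n = 1" and L: "is_partition N L" and states: "\<forall>A\<in>L. is_state A (r A)"
    and B: "(\<Sum>A\<in>L. (real (card A))\<^sup>2) \<le> B"
  shows "qfi_bounded_on (configs {1..N}) (J_op N n) B (prod_op L r)"
proof -
  obtain T :: "(nat set \<Rightarrow> cfg) set" and W :: "(nat set \<Rightarrow> cfg) \<Rightarrow> real" and v
    where "finite T" and "\<forall>t\<in>T. W t \<ge> 0" and "(\<Sum>t\<in>T. W t) = 1"
    and unit: "\<forall>t\<in>T. \<forall>A\<in>L. inner_on (configs A) (v t A) (v t A) = 1"
    and mix: "\<forall>x y. prod_op L r x y
      = (\<Sum>t\<in>T. complex_of_real (W t) * (prod_vec L (v t) x * cnj (prod_vec L (v t) y)))"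
    by (rule prod_op_pure_mixture[OF L states])
  show ?thesis
  proof (rule qfi_bounded_on_convex[where p = W and \<tau> = "\<lambda>t x y. prod_vec L (v t) x * cnj (prod_vec L (v t) y)"])
    show "\<forall>t\<in>T. qfi_bounded_on (configs {1..N}) (J_op N n) B
        (\<lambda>x y. prod_vec L (v t) x * cnj (prod_vec L (v t) y))"
      using qfi_bounded_on_prod_vec[OF n L _ B] unit by blast
    show "\<forall>x\<in>configs {1..N}. \<forall>y\<in>configs {1..N}.
        prod_op L r x y = (\<Sum>t\<in>T. complex_of_real (W t) * (prod_vec L (v t) x * cnj (prod_vec L (v t) y)))"
      using mix by blast
  qed fact+
qed

lemma qfi_bounded_on_sep_wrt:
  assumes n: "norm n = 1" and L: "is_partition N L" and B: "(\<Sum>A\<in>L. (real (card A))\<^sup>2) \<le> B"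
    and sep: "sep_wrt N L \<sigma>"
  shows "qfi_bounded_on (configs {1..N}) (J_op N n) B \<sigma>"
proof -
  obtain G :: "nat set" and p :: "nat \<Rightarrow> real" and r :: "nat \<Rightarrow> nat set \<Rightarrow> qop" where "finite G" "\<forall>g\<in>G. p g \<ge> 0" "(\<Sum>g\<in>G. p g) = 1"
    and states: "\<forall>g\<in>G. \<forall>A\<in>L. is_state A (r g A)"
    and mix: "\<forall>x\<in>configs {1..N}. \<forall>y\<in>configs {1..N}. \<sigma> x y = (\<Sum>g\<in>G. complex_of_real (p g) * prod_op L (r g) x y)"
    using sep unfolding sep_wrt_def by (elim exE conjE) (rule that; assumption)
  moreover have "\<forall>g\<in>G. qfi_bounded_on (configs {1..N}) (J_op N n) B (prod_op L (r g))"
    using qfi_bounded_on_prod_op[OF n L _ B] states by blast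
  ultimately show ?thesis by (intro qfi_bounded_on_convex)
qed

lemma qfi_bounded_on_wh_sep:
  assumes n: "norm n = 1" and wh: "wh_sep N w h \<rho>"
  shows "qfi_bounded_on (configs {1..N}) (J_op N n) (real w * (real N - real h) + real N) \<rho>"
proof -
  obtain K :: "nat set" and P :: "nat \<Rightarrow> real" and L :: "nat \<Rightarrow> nat set set" and s :: "nat \<Rightarrow> qop"
    where "finite K" "\<forall>k\<in>K. P k \<ge> 0" "(\<Sum>k\<in>K. P k) = 1"
    and parts: "\<forall>k\<in>K. is_partition N (L k) \<and> max_block (L k) \<le> w \<and> card (L k) \<ge> h \<and> sep_wrt N (L k) (s k)"
    and mix: "\<forall>x\<in>configs {1..N}. \<forall>y\<in>configs {1..N}. \<rho> x y = (\<Sum>k\<in>K. complex_of_real (P k) * s k x y)"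
    using wh unfolding wh_sep_def by (elim exE conjE) (rule that; assumption)
  moreover have "\<forall>k\<in>K. qfi_bounded_on (configs {1..N}) (J_op N n) (real w * (real N - real h) + real N) (s k)"
    using parts qfi_bounded_on_sep_wrt[OF n _ sum_card_squares_le] by blast
  ultimately show ?thesis by (intro qfi_bounded_on_convex)
qed

theorem mainTheorem1:
  fixes N w h :: nat and \<rho> :: qop and n :: "real^3"
  assumes "N \<ge> 1" and "w \<ge> 1" and "h \<ge> 1"
    and "real N / real h \<le> real w" and "real w \<le> real N - real h + 1"
    and "wh_sep N w h \<rho>"
    and "norm n = 1"
  shows "QFI N \<rho> (J_op N n) \<le> real w * (real N - real h) + real N"
proof (rule QFI_le)
  have "qfi_bounded_on (configs {1..N}) (J_op N n) (real w * (real N - real h) + real N) \<rho>"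
    using qfi_bounded_on_wh_sep[OF assms(7,6)] .
  then show "hermitian_on (configs {1..N}) \<rho>"
    and "\<And>X. hermitian_on (configs {1..N}) X \<Longrightarrow>
           qfi_functional (configs {1..N}) (J_op N n) X \<rho> \<le> real w * (real N - real h) + real N"
    unfolding qfi_bounded_on_def by blast+
  show "hermitian_on (configs {1..N}) (J_op N n)" by (rule hermitian_J_op)
qed

end
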